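(* Let $f:A\to B$ and $g:D\to C$. Then the composite $\mathsf1\cong\mathsf1\otimes\mathsf1\xrightarrow{\hat f\otimes\hat g}(A^\perp⅋B)\otimes(C⅋D^\perp)\xrightarrow{\tau_{A^\perp,B,C,D^\perp}}A^\perp⅋(B\otimes C)⅋D^\perp\cong(D^\perp⅋A^\perp)⅋(B\otimes C)$ equals $\widehat{f\otimes g}:\mathsf1\to(D^\perp⅋A^\perp)⅋(B\otimes C)$.
   Context: Write ⅋ for par. Let $\mathcal C$ be a $*$-autonomous category: symmetric monoidal $(\mathcal C,\otimes,\mathsf1)$ with contravariant $(-)^\perp$, $A^{\perp\perp}\cong A$, natural bijections (curryfication) $\mathrm{Hom}(A\otimes B^\perp,C)\cong\mathrm{Hom}(A,C⅋B)$, where $A⅋B=(B^\perp\otimes A^\perp)^\perp$; by symmetry one can also curryfy on the left. Evaluations $\epsilon_B:(C⅋B)\otimes B^\perp\to C$ and $B^\perp\otimes(B⅋C)\to C$ are the de-curryfications of identities. The name of a map $f:A\to B$ is $\hat f:\mathsf1\to A^\perp⅋B$, the curryfication of $f\circ\rho_A:A\otimes\mathsf1\to B$ (up to symmetry, also viewed as $\mathsf1\to B⅋A^\perp$). The internal tensor $\tau_{A,B,C,D}:(A⅋B)\otimes(C⅋D)\to A⅋(B\otimes C)⅋D$ is obtained by curryfying twice (left and right) the map $\epsilon_A\otimes\epsilon_D:A^\perp\otimes(A⅋B)\otimes(C⅋D)\otimes D^\perp\to B\otimes C$. Unnamed isomorphisms are the canonical coherence isomorphisms. *)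

theory Defs
  imports Main
begin

(* A *-autonomous category, presented (following Barr) as a symmetric monoidal
   closed category with a dualizing object Bot.
   Cmp g f is the composite "g after f".  Tm is the tensor on morphisms.
   Asc A B C : (A*B)*C -> A*(B*C),  Lu A : 1*A -> A,  Ru A : A*1 -> A,
   Sy A B : A*B -> B*A,  Ev B C : (B -o C)*B -> C  (evaluation of the
   internal hom Ihom B C = B -o C).  A^perp := A -o Bot. *)

record ('o,'m) sacat =
  Arr :: "'m set"
  Dom :: "'m \<Rightarrow> 'o"
  Cod :: "'m \<Rightarrow> 'o"
  Cmp :: "'m \<Rightarrow> 'm \<Rightarrow> 'm"
  Idm :: "'o \<Rightarrow> 'm"
  Tn :: "'o \<Rightarrow> 'o \<Rightarrow> 'o"
  Tm :: "'m \<Rightarrow> 'm \<Rightarrow> 'm"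
  Unit :: "'o"
  Asc :: "'o \<Rightarrow> 'o \<Rightarrow> 'o \<Rightarrow> 'm"
  Lu :: "'o \<Rightarrow> 'm"
  Ru :: "'o \<Rightarrow> 'm"
  Sy :: "'o \<Rightarrow> 'o \<Rightarrow> 'm"
  Ihom :: "'o \<Rightarrow> 'o \<Rightarrow> 'o"
  Ev :: "'o \<Rightarrow> 'o \<Rightarrow> 'm"
  Bot :: "'o"

definition hom :: "('o,'m) sacat \<Rightarrow> 'o \<Rightarrow> 'o \<Rightarrow> 'm set" where
  "hom S A B = {f \<in> Arr S. Dom S f = A \<and> Cod S f = B}"

definition is_iso :: "('o,'m) sacat \<Rightarrow> 'm \<Rightarrow> bool" where
  "is_iso S f \<longleftrightarrow> f \<in> Arr S \<and> (\<exists>g \<in> hom S (Cod S f) (Dom S f).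
      Cmp S g f = Idm S (Dom S f) \<and> Cmp S f g = Idm S (Cod S f))"

definition inv_arr :: "('o,'m) sacat \<Rightarrow> 'm \<Rightarrow> 'm" where
  "inv_arr S f = (THE g. g \<in> hom S (Cod S f) (Dom S f) \<and>
      Cmp S g f = Idm S (Dom S f) \<and> Cmp S f g = Idm S (Cod S f))"

definition lam :: "('o,'m) sacat \<Rightarrow> 'o \<Rightarrow> 'o \<Rightarrow> 'o \<Rightarrow> 'm \<Rightarrow> 'm" where
  "lam S A B C f = (THE h. h \<in> hom S A (Ihom S B C) \<and>
      Cmp S (Ev S B C) (Tm S h (Idm S B)) = f)"

definition dl :: "('o,'m) sacat \<Rightarrow> 'o \<Rightarrow> 'o" where
  "dl S A = Ihom S A (Bot S)"

definition dlm :: "('o,'m) sacat \<Rightarrow> 'm \<Rightarrow> 'm" where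
  "dlm S f = lam S (dl S (Cod S f)) (Dom S f) (Bot S)
      (Cmp S (Ev S (Cod S f) (Bot S)) (Tm S (Idm S (dl S (Cod S f))) f))"

definition dd :: "('o,'m) sacat \<Rightarrow> 'o \<Rightarrow> 'm" where
  "dd S A = lam S A (dl S A) (Bot S) (Cmp S (Ev S A (Bot S)) (Sy S A (dl S A)))"

locale star_autonomous =
  fixes S :: "('o,'m) sacat"
  assumes idm_hom: "Idm S A \<in> hom S A A"
    and cmp_hom: "\<lbrakk>f \<in> Arr S; g \<in> Arr S; Cod S f = Dom S g\<rbrakk>
        \<Longrightarrow> Cmp S g f \<in> hom S (Dom S f) (Cod S g)"
    and idm_left: "f \<in> Arr S \<Longrightarrow> Cmp S (Idm S (Cod S f)) f = f"
    and idm_right: "f \<in> Arr S \<Longrightarrow> Cmp S f (Idm S (Dom S f)) = f"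
    and cmp_assoc: "\<lbrakk>f \<in> Arr S; g \<in> Arr S; h \<in> Arr S; Cod S f = Dom S g; Cod S g = Dom S h\<rbrakk>
        \<Longrightarrow> Cmp S h (Cmp S g f) = Cmp S (Cmp S h g) f"
    and tm_hom: "\<lbrakk>f \<in> Arr S; g \<in> Arr S\<rbrakk>
        \<Longrightarrow> Tm S f g \<in> hom S (Tn S (Dom S f) (Dom S g)) (Tn S (Cod S f) (Cod S g))"
    and tm_idm: "Tm S (Idm S A) (Idm S B) = Idm S (Tn S A B)"
    and tm_cmp: "\<lbrakk>f \<in> Arr S; f' \<in> Arr S; g \<in> Arr S; g' \<in> Arr S;
        Cod S f = Dom S f'; Cod S g = Dom S g'\<rbrakk>
        \<Longrightarrow> Tm S (Cmp S f' f) (Cmp S g' g) = Cmp S (Tm S f' g') (Tm S f g)"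
    and asc_hom: "Asc S A B C \<in> hom S (Tn S (Tn S A B) C) (Tn S A (Tn S B C))"
    and asc_iso: "is_iso S (Asc S A B C)"
    and asc_nat: "\<lbrakk>f \<in> Arr S; g \<in> Arr S; h \<in> Arr S\<rbrakk>
        \<Longrightarrow> Cmp S (Asc S (Cod S f) (Cod S g) (Cod S h)) (Tm S (Tm S f g) h)
          = Cmp S (Tm S f (Tm S g h)) (Asc S (Dom S f) (Dom S g) (Dom S h))"
    and lu_hom: "Lu S A \<in> hom S (Tn S (Unit S) A) A"
    and lu_iso: "is_iso S (Lu S A)"
    and lu_nat: "f \<in> Arr S \<Longrightarrow>
        Cmp S (Lu S (Cod S f)) (Tm S (Idm S (Unit S)) f) = Cmp S f (Lu S (Dom S f))"
    and ru_hom: "Ru S A \<in> hom S (Tn S A (Unit S)) A"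
    and ru_iso: "is_iso S (Ru S A)"
    and ru_nat: "f \<in> Arr S \<Longrightarrow>
        Cmp S (Ru S (Cod S f)) (Tm S f (Idm S (Unit S))) = Cmp S f (Ru S (Dom S f))"
    and pentagon: "Cmp S (Asc S A B (Tn S C D)) (Asc S (Tn S A B) C D)
        = Cmp S (Tm S (Idm S A) (Asc S B C D))
            (Cmp S (Asc S A (Tn S B C) D) (Tm S (Asc S A B C) (Idm S D)))"
    and triangle: "Cmp S (Tm S (Idm S A) (Lu S B)) (Asc S A (Unit S) B)
        = Tm S (Ru S A) (Idm S B)"
    and sy_hom: "Sy S A B \<in> hom S (Tn S A B) (Tn S B A)"
    and sy_nat: "\<lbrakk>f \<in> Arr S; g \<in> Arr S\<rbrakk>
        \<Longrightarrow> Cmp S (Sy S (Cod S f) (Cod S g)) (Tm S f g) = Cmp S (Tm S g f) (Sy S (Dom S f) (Dom S g))"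
    and sy_inv: "Cmp S (Sy S B A) (Sy S A B) = Idm S (Tn S A B)"
    and hexagon: "Cmp S (Asc S B C A) (Cmp S (Sy S A (Tn S B C)) (Asc S A B C))
        = Cmp S (Tm S (Idm S B) (Sy S A C)) (Cmp S (Asc S B A C) (Tm S (Sy S A B) (Idm S C)))"
    and ev_hom: "Ev S B C \<in> hom S (Tn S (Ihom S B C) B) C"
    and closed: "f \<in> hom S (Tn S A B) C \<Longrightarrow>
        \<exists>!h. h \<in> hom S A (Ihom S B C) \<and> Cmp S (Ev S B C) (Tm S h (Idm S B)) = f"
    and dualizing: "is_iso S (dd S A)"

definition par :: "('o,'m) sacat \<Rightarrow> 'o \<Rightarrow> 'o \<Rightarrow> 'o" where
  "par S X Y = dl S (Tn S (dl S Y) (dl S X))"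

definition parm :: "('o,'m) sacat \<Rightarrow> 'm \<Rightarrow> 'm \<Rightarrow> 'm" where
  "parm S u v = dlm S (Tm S (dlm S v) (dlm S u))"

definition psym :: "('o,'m) sacat \<Rightarrow> 'o \<Rightarrow> 'o \<Rightarrow> 'm" where
  "psym S X Y = dlm S (Sy S (dl S X) (dl S Y))"

(* associativity of par:  X par (Y par Z) -> (X par Y) par Z *)
definition pa :: "('o,'m) sacat \<Rightarrow> 'o \<Rightarrow> 'o \<Rightarrow> 'o \<Rightarrow> 'm" where
  "pa S X Y Z = dlm S
     (Cmp S (Tm S (dd S (Tn S (dl S Z) (dl S Y))) (Idm S (dl S X)))
       (Cmp S (inv_arr S (Asc S (dl S Z) (dl S Y) (dl S X)))
          (Tm S (Idm S (dl S Z)) (inv_arr S (dd S (Tn S (dl S Y) (dl S X)))))))"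

(* curryfication  Hom(A * B^perp, C) -> Hom(A, C par B), the canonical one *)
definition cur :: "('o,'m) sacat \<Rightarrow> 'o \<Rightarrow> 'o \<Rightarrow> 'o \<Rightarrow> 'm \<Rightarrow> 'm" where
  "cur S A B C f = lam S A (Tn S (dl S B) (dl S C)) (Bot S)
     (Cmp S (Cmp S (Ev S (dl S C) (Bot S)) (Tm S (Cmp S (dd S C) f) (Idm S (dl S C))))
        (inv_arr S (Asc S A (dl S B) (dl S C))))"

(* left curryfication  Hom(B^perp * A, C) -> Hom(A, B par C), via symmetry *)
definition lcur :: "('o,'m) sacat \<Rightarrow> 'o \<Rightarrow> 'o \<Rightarrow> 'o \<Rightarrow> 'm \<Rightarrow> 'm" where
  "lcur S B A C g = Cmp S (psym S C B) (cur S A B C (Cmp S g (Sy S A (dl S B))))"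

definition rev :: "('o,'m) sacat \<Rightarrow> 'o \<Rightarrow> 'o \<Rightarrow> 'm" where
  "rev S C B = (THE e. e \<in> hom S (Tn S (par S C B) (dl S B)) C \<and>
      cur S (par S C B) B C e = Idm S (par S C B))"

definition lev :: "('o,'m) sacat \<Rightarrow> 'o \<Rightarrow> 'o \<Rightarrow> 'm" where
  "lev S B C = (THE e. e \<in> hom S (Tn S (dl S B) (par S B C)) C \<and>
      lcur S B (par S B C) C e = Idm S (par S B C))"

(* internal tensor  tau_{A,B,C,D} : (A par B) * (C par D) -> A par ((B * C) par D) *)
definition tau :: "('o,'m) sacat \<Rightarrow> 'o \<Rightarrow> 'o \<Rightarrow> 'o \<Rightarrow> 'o \<Rightarrow> 'm" where
  "tau S A B C D =
    (let P = par S A B; Q = par S C D;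
         m = Tm S (lev S A B) (rev S C D);
         al = Cmp S (Asc S (Tn S (dl S A) P) Q (dl S D))
                (Tm S (inv_arr S (Asc S (dl S A) P Q)) (Idm S (dl S D)));
         r = cur S (Tn S (dl S A) (Tn S P Q)) D (Tn S B C) (Cmp S m al)
     in lcur S A (Tn S P Q) (par S (Tn S B C) D) r)"

(* name of f : A -> B,  a map  1 -> A^perp par B *)
definition name :: "('o,'m) sacat \<Rightarrow> 'm \<Rightarrow> 'm" where
  "name S f = lcur S (dl S (Dom S f)) (Unit S) (Cod S f)
     (Cmp S f (Cmp S (Ru S (Dom S f)) (Tm S (inv_arr S (dd S (Dom S f))) (Idm S (Unit S)))))"

end

(*
  Both sides are morphisms from the unit into a negation Z^perp, with
  Z = (B * C)^perp * (A^perp^perp * D^perp^perp), and a morphism into a negation is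
  determined by its transpose with values in Bot.  Transposition turns curryfications
  into evaluations and the structure maps of par into coherence maps of the tensor.
  Since names are natural, the right-hand side is the name of
  (f * g) o (d_A^-1 * d_D^-1).  On the left, the internal tensor evaluates the two
  names back to f and g, and what is left is a cyclic permutation of three tensor
  factors performed three times, together with unitors; by the hexagon, pentagon and
  triangle axioms this is the identity.
*)

theory Submission
  imports Defs
begin

definition uncurry_bot :: "('o,'m) sacat \<Rightarrow> 'o \<Rightarrow> 'm \<Rightarrow> 'm" where
  "uncurry_bot S Y h = Cmp S (Ev S Y (Bot S)) (Tm S h (Idm S Y))"

lemma the_inj_on_preimage:
  assumes "inj_on \<phi> X" "x \<in> X" "\<phi> x = y"
  shows "(THE z. z \<in> X \<and> \<phi> z = y) = x"
  using assms by (auto intro!: the_equality dest: inj_onD)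

context star_autonomous
begin

section \<open>Symmetric monoidal categories\<close>

lemma idm_simps [simp]: "Idm S A \<in> Arr S" "Dom S (Idm S A) = A" "Cod S (Idm S A) = A"
  using idm_hom[of A] by (auto simp: hom_def)

lemma cmp_simps [simp]:
  assumes "f \<in> Arr S" "g \<in> Arr S" "Cod S f = Dom S g"
  shows "Cmp S g f \<in> Arr S" "Dom S (Cmp S g f) = Dom S f" "Cod S (Cmp S g f) = Cod S g"
  using cmp_hom[OF assms] by (auto simp: hom_def)

lemma tm_simps [simp]:
  assumes "f \<in> Arr S" "g \<in> Arr S"
  shows "Tm S f g \<in> Arr S" "Dom S (Tm S f g) = Tn S (Dom S f) (Dom S g)"
    "Cod S (Tm S f g) = Tn S (Cod S f) (Cod S g)"
  using tm_hom[OF assms] by (auto simp: hom_def)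

lemma asc_simps [simp]: "Asc S A B C \<in> Arr S" "Dom S (Asc S A B C) = Tn S (Tn S A B) C"
  "Cod S (Asc S A B C) = Tn S A (Tn S B C)"
  using asc_hom[of A B C] by (auto simp: hom_def)

lemma lu_simps [simp]: "Lu S A \<in> Arr S" "Dom S (Lu S A) = Tn S (Unit S) A" "Cod S (Lu S A) = A"
  using lu_hom[of A] by (auto simp: hom_def)

lemma ru_simps [simp]: "Ru S A \<in> Arr S" "Dom S (Ru S A) = Tn S A (Unit S)" "Cod S (Ru S A) = A"
  using ru_hom[of A] by (auto simp: hom_def)

lemma sy_simps [simp]: "Sy S A B \<in> Arr S" "Dom S (Sy S A B) = Tn S A B" "Cod S (Sy S A B) = Tn S B A"
  using sy_hom[of A B] by (auto simp: hom_def)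

lemma ev_simps [simp]: "Ev S B C \<in> Arr S" "Dom S (Ev S B C) = Tn S (Ihom S B C) B" "Cod S (Ev S B C) = C"
  using ev_hom[of B C] by (auto simp: hom_def)

lemma Ihom_Bot_eq_dl [simp]: "Ihom S Y (Bot S) = dl S Y"
  by (simp add: dl_def)

lemma cmp_assoc_right [simp]:
  "\<lbrakk>f \<in> Arr S; g \<in> Arr S; h \<in> Arr S; Cod S f = Dom S g; Cod S g = Dom S h\<rbrakk>
   \<Longrightarrow> Cmp S (Cmp S h g) f = Cmp S h (Cmp S g f)"
  using cmp_assoc by simp

lemma cmp_idm_left [simp]: "\<lbrakk>f \<in> Arr S; Cod S f = A\<rbrakk> \<Longrightarrow> Cmp S (Idm S A) f = f"
  using idm_left by blast

lemma cmp_idm_right [simp]: "\<lbrakk>f \<in> Arr S; Dom S f = A\<rbrakk> \<Longrightarrow> Cmp S f (Idm S A) = f"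
  using idm_right by blast

lemma cmp_eq_assoc:
  assumes "Cmp S a b = c" "a \<in> Arr S" "b \<in> Arr S" "k \<in> Arr S" "Cod S b = Dom S a" "Cod S k = Dom S b"
  shows "Cmp S a (Cmp S b k) = Cmp S c k"
  using assms cmp_assoc[of k b a] by simp

declare tm_idm [simp]

lemma left_inverse_eq_right_inverse:
  assumes f: "f \<in> Arr S"
    and g: "g \<in> hom S (Cod S f) (Dom S f)" "Cmp S g f = Idm S (Dom S f)"
    and g': "g' \<in> hom S (Cod S f) (Dom S f)" "Cmp S f g' = Idm S (Cod S f)"
  shows "g = g'"
proof -
  have a: "g \<in> Arr S" "Dom S g = Cod S f" "Cod S g = Dom S f"
    "g' \<in> Arr S" "Dom S g' = Cod S f" "Cod S g' = Dom S f"
    using g g' by (auto simp: hom_def)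
  have "g = Cmp S g (Cmp S f g')" using a g' by simp
  also have "\<dots> = Cmp S (Cmp S g f) g'" using a f by (intro cmp_assoc) auto
  also have "\<dots> = g'" using a g by simp
  finally show ?thesis .
qed

lemma iso_arr [simp]: "is_iso S f \<Longrightarrow> f \<in> Arr S"
  unfolding is_iso_def by blast

lemma inv_arr_props:
  assumes "is_iso S f"
  shows "inv_arr S f \<in> Arr S" "Dom S (inv_arr S f) = Cod S f" "Cod S (inv_arr S f) = Dom S f"
    "Cmp S (inv_arr S f) f = Idm S (Dom S f)" "Cmp S f (inv_arr S f) = Idm S (Cod S f)"
proof -
  obtain g where g: "g \<in> hom S (Cod S f) (Dom S f)"
    "Cmp S g f = Idm S (Dom S f)" "Cmp S f g = Idm S (Cod S f)"
    using assms unfolding is_iso_def by blast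
  have "inv_arr S f = g"
    unfolding inv_arr_def
    using g left_inverse_eq_right_inverse[OF iso_arr[OF assms]] by (intro the_equality) blast+
  then show "inv_arr S f \<in> Arr S" "Dom S (inv_arr S f) = Cod S f" "Cod S (inv_arr S f) = Dom S f"
    "Cmp S (inv_arr S f) f = Idm S (Dom S f)" "Cmp S f (inv_arr S f) = Idm S (Cod S f)"
    using g by (auto simp: hom_def)
qed

lemmas inv_arr_simps [simp] = inv_arr_props(1-3)
  and inv_arr_cancel [simp] = inv_arr_props(4,5)

lemma inv_arr_cancel_assoc [simp]:
  assumes "is_iso S f" "h \<in> Arr S"
  shows "Cod S h = Dom S f \<Longrightarrow> Cmp S (inv_arr S f) (Cmp S f h) = h"
    and "Cod S h = Cod S f \<Longrightarrow> Cmp S f (Cmp S (inv_arr S f) h) = h"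
  using assms cmp_eq_assoc[OF inv_arr_props(4)[OF assms(1)], of h]
    cmp_eq_assoc[OF inv_arr_props(5)[OF assms(1)], of h] by simp_all

declare asc_iso [simp] lu_iso [simp] ru_iso [simp] dualizing [simp]

lemma inv_arr_commute:
  assumes "is_iso S a" "is_iso S b" "x \<in> Arr S" "y \<in> Arr S"
    and "Cod S x = Dom S a" "Dom S y = Cod S b" "Dom S x = Dom S b" "Cod S y = Cod S a"
    and comm: "Cmp S a x = Cmp S y b"
  shows "Cmp S (inv_arr S a) y = Cmp S x (inv_arr S b)"
proof -
  have "Cmp S (inv_arr S a) y = Cmp S (inv_arr S a) (Cmp S (Cmp S y b) (inv_arr S b))"
    using assms by simp
  also have "\<dots> = Cmp S x (inv_arr S b)" using assms by (simp flip: comm)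
  finally show ?thesis .
qed

lemma tm_cmp_merge [simp]:
  "\<lbrakk>f \<in> Arr S; f' \<in> Arr S; g \<in> Arr S; g' \<in> Arr S; Cod S f = Dom S f'; Cod S g = Dom S g'\<rbrakk>
   \<Longrightarrow> Cmp S (Tm S f' g') (Tm S f g) = Tm S (Cmp S f' f) (Cmp S g' g)"
  using tm_cmp by simp

lemma tm_cmp_merge_assoc [simp]:
  "\<lbrakk>f \<in> Arr S; f' \<in> Arr S; g \<in> Arr S; g' \<in> Arr S; Cod S f = Dom S f'; Cod S g = Dom S g';
    k \<in> Arr S; Cod S k = Tn S (Dom S f) (Dom S g)\<rbrakk>
   \<Longrightarrow> Cmp S (Tm S f' g') (Cmp S (Tm S f g) k) = Cmp S (Tm S (Cmp S f' f) (Cmp S g' g)) k"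
  using tm_cmp_merge cmp_assoc[of k "Tm S f g" "Tm S f' g'"] by (simp del: cmp_assoc_right)

lemma asc_inv_nat:
  assumes "f \<in> Arr S" "g \<in> Arr S" "h \<in> Arr S"
  shows "Cmp S (inv_arr S (Asc S (Cod S f) (Cod S g) (Cod S h))) (Tm S f (Tm S g h))
    = Cmp S (Tm S (Tm S f g) h) (inv_arr S (Asc S (Dom S f) (Dom S g) (Dom S h)))"
  by (rule inv_arr_commute) (use assms asc_nat in auto)

lemma sy_nat_cod:
  assumes "f \<in> Arr S" "g \<in> Arr S" "X = Cod S f" "Y = Cod S g"
  shows "Cmp S (Sy S X Y) (Tm S f g) = Cmp S (Tm S g f) (Sy S (Dom S f) (Dom S g))"
  using sy_nat assms by simp

lemma sy_nat_assoc:
  assumes "f \<in> Arr S" "g \<in> Arr S" "X = Cod S f" "Y = Cod S g"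
    "k \<in> Arr S" "Cod S k = Tn S (Dom S f) (Dom S g)"
  shows "Cmp S (Sy S X Y) (Cmp S (Tm S f g) k) = Cmp S (Tm S g f) (Cmp S (Sy S (Dom S f) (Dom S g)) k)"
  using assms cmp_eq_assoc[OF sy_nat_cod[OF assms(1-4)], of k] by simp

lemma cmp_cancel_right:
  assumes eq: "Cmp S x P = Cmp S y P" and sect: "Cmp S P Q = Idm S (Cod S P)"
    and arrs: "x \<in> Arr S" "y \<in> Arr S" "P \<in> Arr S" "Q \<in> Arr S"
    and types: "Dom S x = Cod S P" "Dom S y = Cod S P" "Cod S Q = Dom S P"
  shows "x = y"
proof -
  have "Dom S Q = Cod S P"
    using arg_cong[OF sect, of "Dom S"] arrs types by simp
  then have "Cmp S x (Cmp S P Q) = Cmp S y (Cmp S P Q)"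
    using arrs types by (simp flip: cmp_assoc_right add: eq)
  then show ?thesis
    using arrs types by (simp add: sect)
qed

lemma iso_cancel_left:
  assumes "is_iso S P" "Cmp S P x = Cmp S P y" "x \<in> Arr S" "y \<in> Arr S"
    "Cod S x = Dom S P" "Cod S y = Dom S P"
  shows "x = y"
proof -
  have "Cmp S (inv_arr S P) (Cmp S P x) = Cmp S (inv_arr S P) (Cmp S P y)"
    using assms(2) by simp
  then show ?thesis
    using assms(1,3-6) by simp
qed

lemma lu_conjugate:
  assumes "h \<in> Arr S"
  shows "Cmp S (Lu S (Cod S h)) (Cmp S (Tm S (Idm S (Unit S)) h) (inv_arr S (Lu S (Dom S h)))) = h"
proof -
  have "Cmp S (Lu S (Cod S h)) (Cmp S (Tm S (Idm S (Unit S)) h) (inv_arr S (Lu S (Dom S h))))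
      = Cmp S (Cmp S h (Lu S (Dom S h))) (inv_arr S (Lu S (Dom S h)))"
    by (rule cmp_eq_assoc[OF lu_nat[OF assms]]) (simp_all add: assms)
  also have "\<dots> = h"
    using assms by simp
  finally show ?thesis .
qed

lemma ru_conjugate:
  assumes "h \<in> Arr S"
  shows "Cmp S (Ru S (Cod S h)) (Cmp S (Tm S h (Idm S (Unit S))) (inv_arr S (Ru S (Dom S h)))) = h"
proof -
  have "Cmp S (Ru S (Cod S h)) (Cmp S (Tm S h (Idm S (Unit S))) (inv_arr S (Ru S (Dom S h))))
      = Cmp S (Cmp S h (Ru S (Dom S h))) (inv_arr S (Ru S (Dom S h)))"
    by (rule cmp_eq_assoc[OF ru_nat[OF assms]]) (simp_all add: assms)
  also have "\<dots> = h"
    using assms by simp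
  finally show ?thesis .
qed

lemma tm_unit_left_cancel:
  assumes "h \<in> Arr S" "k \<in> Arr S" "Dom S h = Dom S k" "Cod S h = Cod S k"
    "Tm S (Idm S (Unit S)) h = Tm S (Idm S (Unit S)) k"
  shows "h = k"
  by (metis assms lu_conjugate)

lemma tm_unit_right_cancel:
  assumes "h \<in> Arr S" "k \<in> Arr S" "Dom S h = Dom S k" "Cod S h = Cod S k"
    "Tm S h (Idm S (Unit S)) = Tm S k (Idm S (Unit S))"
  shows "h = k"
  by (metis assms ru_conjugate)

text \<open>Kelly's lemma: after tensoring with the unit on the left it follows from the pentagon and the
  triangle.\<close>

lemma lu_tn_asc: "Cmp S (Lu S (Tn S A B)) (Asc S (Unit S) A B) = Tm S (Lu S A) (Idm S B)"
proof -
  let ?I = "Unit S"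
  define P where "P = Cmp S (Asc S ?I (Tn S ?I A) B) (Tm S (Asc S ?I ?I A) (Idm S B))"
  define Q where "Q = Cmp S (Tm S (inv_arr S (Asc S ?I ?I A)) (Idm S B)) (inv_arr S (Asc S ?I (Tn S ?I A) B))"
  have asc_nat_lu: "Cmp S (Asc S ?I A B) (Tm S (Tm S (Idm S ?I) (Lu S A)) (Idm S B))
      = Cmp S (Tm S (Idm S ?I) (Tm S (Lu S A) (Idm S B))) (Asc S ?I (Tn S ?I A) B)"
    using asc_nat[of "Idm S ?I" "Lu S A" "Idm S B"] by simp
  have "Cmp S (Tm S (Idm S ?I) (Cmp S (Lu S (Tn S A B)) (Asc S ?I A B))) P
     = Cmp S (Tm S (Idm S ?I) (Lu S (Tn S A B))) (Cmp S (Asc S ?I ?I (Tn S A B)) (Asc S (Tn S ?I ?I) A B))"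
    by (simp add: P_def pentagon)
  also have "\<dots> = Cmp S (Tm S (Ru S ?I) (Idm S (Tn S A B))) (Asc S (Tn S ?I ?I) A B)"
    by (simp add: cmp_eq_assoc[OF triangle])
  also have "\<dots> = Cmp S (Asc S ?I A B) (Tm S (Tm S (Ru S ?I) (Idm S A)) (Idm S B))"
    using asc_nat[of "Ru S ?I" "Idm S A" "Idm S B"] by simp
  also have "\<dots> = Cmp S (Asc S ?I A B) (Tm S (Cmp S (Tm S (Idm S ?I) (Lu S A)) (Asc S ?I ?I A)) (Idm S B))"
    by (simp add: triangle)
  also have "\<dots> = Cmp S (Tm S (Idm S ?I) (Tm S (Lu S A) (Idm S B))) P"
    using cmp_eq_assoc[OF asc_nat_lu, of "Tm S (Asc S ?I ?I A) (Idm S B)"] by (simp add: P_def)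
  finally have "Tm S (Idm S ?I) (Cmp S (Lu S (Tn S A B)) (Asc S ?I A B)) = Tm S (Idm S ?I) (Tm S (Lu S A) (Idm S B))"
    by (rule cmp_cancel_right[where Q = Q]) (simp_all add: P_def Q_def)
  then show ?thesis
    by (rule tm_unit_left_cancel[rotated 4]) simp_all
qed

lemma lu_tn_asc_inv: "Cmp S (Tm S (Lu S A) (Idm S B)) (inv_arr S (Asc S (Unit S) A B)) = Lu S (Tn S A B)"
  by (simp flip: lu_tn_asc)

lemma sy_inv_assoc [simp]:
  assumes "k \<in> Arr S" "Cod S k = Tn S A B"
  shows "Cmp S (Sy S B A) (Cmp S (Sy S A B) k) = k"
  using assms cmp_eq_assoc[OF sy_inv, where k=k] by simp

declare sy_inv [simp]

lemma ru_eq_lu_sy: "Ru S A = Cmp S (Lu S A) (Sy S A (Unit S))"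
proof (rule tm_unit_right_cancel[rotated 4])
  let ?I = "Unit S"
  have "Cmp S (Sy S A ?I) (Tm S (Ru S A) (Idm S ?I))
      = Cmp S (Sy S A ?I) (Cmp S (Tm S (Idm S A) (Lu S ?I)) (Asc S A ?I ?I))"
    by (simp add: triangle)
  also have "\<dots> = Cmp S (Tm S (Lu S ?I) (Idm S A)) (Cmp S (Sy S A (Tn S ?I ?I)) (Asc S A ?I ?I))"
    using sy_nat_assoc[of "Idm S A" "Lu S ?I" A ?I "Asc S A ?I ?I"] by simp
  also have "\<dots> = Cmp S (Lu S (Tn S ?I A)) (Cmp S (Asc S ?I ?I A) (Cmp S (Sy S A (Tn S ?I ?I)) (Asc S A ?I ?I)))"
    by (simp add: cmp_eq_assoc[OF lu_tn_asc])
  also have "\<dots> = Cmp S (Lu S (Tn S ?I A))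
      (Cmp S (Tm S (Idm S ?I) (Sy S A ?I)) (Cmp S (Asc S ?I A ?I) (Tm S (Sy S A ?I) (Idm S ?I))))"
    by (simp only: hexagon)
  also have "\<dots> = Cmp S (Sy S A ?I) (Cmp S (Lu S (Tn S A ?I)) (Cmp S (Asc S ?I A ?I) (Tm S (Sy S A ?I) (Idm S ?I))))"
    by (simp add: cmp_eq_assoc[OF lu_nat[of "Sy S A ?I"], simplified])
  also have "\<dots> = Cmp S (Sy S A ?I) (Tm S (Cmp S (Lu S A) (Sy S A ?I)) (Idm S ?I))"
    by (simp add: cmp_eq_assoc[OF lu_tn_asc])
  finally have "Cmp S (Sy S A ?I) (Tm S (Ru S A) (Idm S ?I))
      = Cmp S (Sy S A ?I) (Tm S (Cmp S (Lu S A) (Sy S A ?I)) (Idm S ?I))" .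
  from arg_cong[OF this, of "Cmp S (Sy S ?I A)"]
  show "Tm S (Ru S A) (Idm S ?I) = Tm S (Cmp S (Lu S A) (Sy S A ?I)) (Idm S ?I)"
    by simp
qed simp_all

lemma ru_sy [simp]: "Cmp S (Ru S A) (Sy S (Unit S) A) = Lu S A"
  by (simp add: ru_eq_lu_sy)

lemma hexagon_inv:
  "Cmp S (inv_arr S (Asc S C A B)) (Cmp S (Sy S (Tn S A B) C) (inv_arr S (Asc S A B C)))
   = Cmp S (Tm S (Sy S A C) (Idm S B)) (Cmp S (inv_arr S (Asc S A C B)) (Tm S (Idm S A) (Sy S B C)))"
proof -
  let ?L' = "Cmp S (inv_arr S (Asc S C A B)) (Cmp S (Sy S (Tn S A B) C) (inv_arr S (Asc S A B C)))"
  let ?R' = "Cmp S (Tm S (Sy S A C) (Idm S B)) (Cmp S (inv_arr S (Asc S A C B)) (Tm S (Idm S A) (Sy S B C)))"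
  let ?L = "Cmp S (Asc S A B C) (Cmp S (Sy S C (Tn S A B)) (Asc S C A B))"
  let ?R = "Cmp S (Tm S (Idm S A) (Sy S C B)) (Cmp S (Asc S A C B) (Tm S (Sy S C A) (Idm S B)))"
  have "?L' = Cmp S ?L' (Cmp S ?R ?R')" by simp
  also have "\<dots> = Cmp S ?L' (Cmp S ?L ?R')" by (simp only: hexagon)
  also have "\<dots> = ?R'" by simp
  finally show ?thesis .
qed

lemma sy_asc_inv_cycle:
  "Cmp S (Sy S (Tn S a d) X) (Cmp S (inv_arr S (Asc S a d X)) (Cmp S (Sy S (Tn S d X) a)
     (Cmp S (inv_arr S (Asc S d X a)) (Cmp S (Sy S (Tn S X a) d) (inv_arr S (Asc S X a d))))))
   = Idm S (Tn S X (Tn S a d))"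
proof -
  have hexagon_inv_rotated: "Cmp S (Sy S (Tn S X d) a) (inv_arr S (Asc S X d a)) = Cmp S (Asc S a X d)
      (Cmp S (Tm S (Sy S X a) (Idm S d)) (Cmp S (inv_arr S (Asc S X a d)) (Tm S (Idm S X) (Sy S d a))))"
    using arg_cong[OF hexagon_inv[of a X d], of "Cmp S (Asc S a X d)"] by simp
  have sy_nat_sy: "Cmp S (Sy S (Tn S d X) a) (Tm S (Sy S X d) (Idm S a))
      = Cmp S (Tm S (Idm S a) (Sy S X d)) (Sy S (Tn S X d) a)"
    using sy_nat[of "Sy S X d" "Idm S a"] by simp
  have "Cmp S (Sy S (Tn S a d) X) (Cmp S (inv_arr S (Asc S a d X)) (Cmp S (Sy S (Tn S d X) a)
      (Cmp S (inv_arr S (Asc S d X a)) (Cmp S (Sy S (Tn S X a) d) (inv_arr S (Asc S X a d))))))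
    = Cmp S (Sy S (Tn S a d) X) (Cmp S (inv_arr S (Asc S a d X)) (Cmp S (Sy S (Tn S d X) a)
      (Cmp S (Tm S (Sy S X d) (Idm S a)) (Cmp S (inv_arr S (Asc S X d a)) (Tm S (Idm S X) (Sy S a d))))))"
    by (simp only: hexagon_inv)
  also have "\<dots> = Cmp S (Sy S (Tn S a d) X) (Cmp S (inv_arr S (Asc S a d X)) (Cmp S (Tm S (Idm S a) (Sy S X d))
      (Cmp S (Sy S (Tn S X d) a) (Cmp S (inv_arr S (Asc S X d a)) (Tm S (Idm S X) (Sy S a d))))))"
    by (simp add: cmp_eq_assoc[OF sy_nat_sy])
  also have "\<dots> = Cmp S (Sy S (Tn S a d) X) (Cmp S (inv_arr S (Asc S a d X)) (Cmp S (Tm S (Idm S a) (Sy S X d))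
      (Cmp S (Asc S a X d) (Cmp S (Tm S (Sy S X a) (Idm S d)) (inv_arr S (Asc S X a d))))))"
    by (simp add: cmp_eq_assoc[OF hexagon_inv_rotated])
  also have "\<dots> = Cmp S (Sy S (Tn S a d) X) (Cmp S (inv_arr S (Asc S a d X)) (Cmp S (Asc S a d X)
      (Cmp S (Sy S X (Tn S a d)) (Cmp S (Asc S X a d) (inv_arr S (Asc S X a d))))))"
    using arg_cong[OF hexagon[where A=X and B=a and C=d, symmetric],
        of "\<lambda>u. Cmp S u (inv_arr S (Asc S X a d))"] by simp
  also have "\<dots> = Idm S (Tn S X (Tn S a d))" by simp
  finally show ?thesis .
qed

lemma sy_asc_inv_cycle_assoc:
  assumes "k \<in> Arr S" "Cod S k = Tn S X (Tn S a d)"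
  shows "Cmp S (Sy S (Tn S a d) X) (Cmp S (inv_arr S (Asc S a d X)) (Cmp S (Sy S (Tn S d X) a)
     (Cmp S (inv_arr S (Asc S d X a)) (Cmp S (Sy S (Tn S X a) d) (Cmp S (inv_arr S (Asc S X a d)) k))))) = k"
  using assms arg_cong[OF sy_asc_inv_cycle[of a d X], of "\<lambda>u. Cmp S u k"] by simp

lemma ru_tm_lu_unit:
  "Cmp S (Tm S (Ru S a) (Lu S d)) (Cmp S (Asc S (Tn S a (Unit S)) (Unit S) d)
      (Tm S (Cmp S (inv_arr S (Asc S a (Unit S) (Unit S))) (Tm S (Idm S a) (inv_arr S (Lu S (Unit S))))) (Idm S d)))
   = Tm S (Ru S a) (Idm S d)"
proof -
  let ?I = "Unit S"
  have asc_nat_lu_inv: "Cmp S (Asc S a (Tn S ?I ?I) d) (Tm S (Tm S (Idm S a) (inv_arr S (Lu S ?I))) (Idm S d))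
     = Cmp S (Tm S (Idm S a) (Tm S (inv_arr S (Lu S ?I)) (Idm S d))) (Asc S a ?I d)"
    using asc_nat[of "Idm S a" "inv_arr S (Lu S ?I)" "Idm S d"] by simp
  have "Tm S (Ru S a) (Lu S d)
      = Cmp S (Tm S (Idm S a) (Lu S d)) (Cmp S (Tm S (Idm S a) (Lu S (Tn S ?I d))) (Asc S a ?I (Tn S ?I d)))"
    by (simp add: triangle)
  then have "Cmp S (Tm S (Ru S a) (Lu S d)) (Cmp S (Asc S (Tn S a ?I) ?I d)
      (Tm S (Cmp S (inv_arr S (Asc S a ?I ?I)) (Tm S (Idm S a) (inv_arr S (Lu S ?I)))) (Idm S d)))
    = Cmp S (Tm S (Idm S a) (Lu S d)) (Asc S a ?I d)"
    by (simp add: cmp_eq_assoc[OF pentagon] lu_tn_asc cmp_eq_assoc[OF lu_tn_asc] asc_nat_lu_inv)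
  also have "\<dots> = Tm S (Ru S a) (Idm S d)"
    by (simp add: triangle)
  finally show ?thesis .
qed

section \<open>The closed structure and linear negation\<close>

lemma lam_props:
  assumes "f \<in> Arr S" "Dom S f = Tn S A B" "Cod S f = C"
  shows "lam S A B C f \<in> Arr S" "Dom S (lam S A B C f) = A" "Cod S (lam S A B C f) = Ihom S B C"
    "Cmp S (Ev S B C) (Tm S (lam S A B C f) (Idm S B)) = f"
proof -
  have "f \<in> hom S (Tn S A B) C" using assms by (simp add: hom_def)
  from theI'[OF closed[OF this]]
  have "lam S A B C f \<in> hom S A (Ihom S B C) \<and> Cmp S (Ev S B C) (Tm S (lam S A B C f) (Idm S B)) = f"
    unfolding lam_def .
  then show "lam S A B C f \<in> Arr S" "Dom S (lam S A B C f) = A" "Cod S (lam S A B C f) = Ihom S B C"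
    "Cmp S (Ev S B C) (Tm S (lam S A B C f) (Idm S B)) = f"
    by (auto simp: hom_def)
qed

lemmas lam_simps [simp] = lam_props(1-3)

lemma lam_unique:
  assumes "h \<in> Arr S" "Dom S h = A" "Cod S h = Ihom S B C" "Cmp S (Ev S B C) (Tm S h (Idm S B)) = f"
  shows "lam S A B C f = h"
proof -
  have "f \<in> hom S (Tn S A B) C" using assms by (auto simp: hom_def)
  moreover have "h \<in> hom S A (Ihom S B C) \<and> Cmp S (Ev S B C) (Tm S h (Idm S B)) = f"
    using assms by (auto simp: hom_def)
  ultimately show ?thesis
    unfolding lam_def by (rule the1_equality[OF closed])
qed

lemma uncurry_bot_simps [simp]:
  assumes "h \<in> Arr S" "Cod S h = dl S Y"
  shows "uncurry_bot S Y h \<in> Arr S" "Dom S (uncurry_bot S Y h) = Tn S (Dom S h) Y"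
    "Cod S (uncurry_bot S Y h) = Bot S"
  using assms by (auto simp: uncurry_bot_def)

lemma uncurry_bot_inj:
  assumes "uncurry_bot S Y h = uncurry_bot S Y h'"
    and "h \<in> Arr S" "h' \<in> Arr S" "Dom S h = Dom S h'" "Cod S h = dl S Y" "Cod S h' = dl S Y"
  shows "h = h'"
proof -
  have "lam S (Dom S h) Y (Bot S) (uncurry_bot S Y h) = h"
    using assms(2,5) by (intro lam_unique) (auto simp: uncurry_bot_def)
  moreover have "lam S (Dom S h') Y (Bot S) (uncurry_bot S Y h') = h'"
    using assms(3,6) by (intro lam_unique) (auto simp: uncurry_bot_def)
  ultimately show ?thesis using assms(1,4) by metis
qed

lemma uncurry_bot_lam [simp]:
  assumes "f \<in> Arr S" "Dom S f = Tn S A Y" "Cod S f = Bot S"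
  shows "uncurry_bot S Y (lam S A Y (Bot S) f) = f"
  using lam_props[OF assms] by (simp add: uncurry_bot_def)

lemma uncurry_bot_cmp:
  assumes "h \<in> Arr S" "k \<in> Arr S" "Cod S k = Dom S h" "Cod S h = dl S Y"
  shows "uncurry_bot S Y (Cmp S h k) = Cmp S (uncurry_bot S Y h) (Tm S k (Idm S Y))"
  using assms by (simp add: uncurry_bot_def)

lemma dlm_simps [simp]:
  assumes "f \<in> Arr S"
  shows "dlm S f \<in> Arr S" "Dom S (dlm S f) = dl S (Cod S f)" "Cod S (dlm S f) = dl S (Dom S f)"
  using assms by (simp_all add: dlm_def)

lemma uncurry_bot_dlm:
  assumes "f \<in> Arr S" "X = Dom S f"
  shows "uncurry_bot S X (dlm S f) = Cmp S (Ev S (Cod S f) (Bot S)) (Tm S (Idm S (dl S (Cod S f))) f)"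
  using assms by (simp add: dlm_def)

lemma uncurry_bot_dlm_cmp:
  assumes "u \<in> Arr S" "h \<in> Arr S" "Cod S h = dl S (Cod S u)" "X = Dom S u"
  shows "uncurry_bot S X (Cmp S (dlm S u) h) = Cmp S (uncurry_bot S (Cod S u) h) (Tm S (Idm S (Dom S h)) u)"
proof -
  have "uncurry_bot S X (Cmp S (dlm S u) h)
      = Cmp S (uncurry_bot S (Dom S u) (dlm S u)) (Tm S h (Idm S (Dom S u)))"
    using assms by (simp add: uncurry_bot_cmp)
  also have "\<dots> = Cmp S (uncurry_bot S (Cod S u) h) (Tm S (Idm S (Dom S h)) u)"
    using assms by (simp add: uncurry_bot_dlm, simp add: uncurry_bot_def)
  finally show ?thesis .
qed

lemma dlm_idm [simp]: "dlm S (Idm S Y) = Idm S (dl S Y)"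
  by (rule uncurry_bot_inj[where Y=Y]) (simp_all add: uncurry_bot_dlm, simp add: uncurry_bot_def)

lemma dlm_cmp:
  assumes "u \<in> Arr S" "v \<in> Arr S" "Cod S u = Dom S v"
  shows "Cmp S (dlm S u) (dlm S v) = dlm S (Cmp S v u)"
proof (rule uncurry_bot_inj[where Y="Dom S u"])
  show "uncurry_bot S (Dom S u) (Cmp S (dlm S u) (dlm S v)) = uncurry_bot S (Dom S u) (dlm S (Cmp S v u))"
    using assms by (simp add: uncurry_bot_dlm_cmp uncurry_bot_dlm)
qed (use assms in auto)

lemma dd_simps [simp]: "dd S A \<in> Arr S" "Dom S (dd S A) = A" "Cod S (dd S A) = dl S (dl S A)"
  by (simp_all add: dd_def)

lemma uncurry_bot_dd: "uncurry_bot S (dl S A) (dd S A) = Cmp S (Ev S A (Bot S)) (Sy S A (dl S A))"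
  by (simp add: dd_def)

lemma ev_dd:
  "Cmp S (Ev S (dl S A) (Bot S)) (Tm S (dd S A) (Idm S (dl S A))) = Cmp S (Ev S A (Bot S)) (Sy S A (dl S A))"
  using uncurry_bot_dd by (simp add: uncurry_bot_def)

lemma ev_dl_tm_idm:
  assumes "F \<in> Arr S" "Cod S F = dl S V"
  shows "Cmp S (Ev S (dl S V) (Bot S)) (Tm S (Idm S (dl S (dl S V))) F)
    = Cmp S (uncurry_bot S V F)
        (Cmp S (Tm S (Idm S (Dom S F)) (inv_arr S (dd S V))) (Sy S (dl S (dl S V)) (Dom S F)))"
proof -
  have "Tm S (Idm S (dl S (dl S V))) F = Cmp S (Tm S (dd S V) (Idm S (dl S V))) (Tm S (inv_arr S (dd S V)) F)"
    using assms by simp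
  then have "Cmp S (Ev S (dl S V) (Bot S)) (Tm S (Idm S (dl S (dl S V))) F)
     = Cmp S (Cmp S (Ev S (dl S V) (Bot S)) (Tm S (dd S V) (Idm S (dl S V)))) (Tm S (inv_arr S (dd S V)) F)"
    using assms by simp
  also have "\<dots> = Cmp S (Ev S V (Bot S)) (Cmp S (Sy S V (dl S V)) (Tm S (inv_arr S (dd S V)) F))"
    using assms by (simp add: ev_dd)
  also have "\<dots> = Cmp S (Ev S V (Bot S)) (Cmp S (Tm S F (inv_arr S (dd S V))) (Sy S (dl S (dl S V)) (Dom S F)))"
    using assms by (subst sy_nat_cod) auto
  also have "\<dots> = Cmp S (uncurry_bot S V F)
      (Cmp S (Tm S (Idm S (Dom S F)) (inv_arr S (dd S V))) (Sy S (dl S (dl S V)) (Dom S F)))"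
    using assms by (simp add: uncurry_bot_def)
  finally show ?thesis .
qed

lemma dd_nat:
  assumes "v \<in> Arr S"
  shows "Cmp S (dlm S (dlm S v)) (dd S (Dom S v)) = Cmp S (dd S (Cod S v)) v"
proof (rule uncurry_bot_inj[where Y="dl S (Cod S v)"])
  have "uncurry_bot S (dl S (Cod S v)) (Cmp S (dlm S (dlm S v)) (dd S (Dom S v)))
      = Cmp S (uncurry_bot S (dl S (Dom S v)) (dd S (Dom S v))) (Tm S (Idm S (Dom S v)) (dlm S v))"
    using assms by (subst uncurry_bot_dlm_cmp) simp_all
  also have "\<dots> = Cmp S (Ev S (Dom S v) (Bot S)) (Cmp S (Sy S (Dom S v) (dl S (Dom S v))) (Tm S (Idm S (Dom S v)) (dlm S v)))"
    using assms by (simp add: uncurry_bot_dd)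
  also have "\<dots> = Cmp S (uncurry_bot S (Dom S v) (dlm S v)) (Sy S (Dom S v) (dl S (Cod S v)))"
    using assms by (simp add: sy_nat_cod uncurry_bot_def)
  also have "\<dots> = Cmp S (Ev S (Cod S v) (Bot S)) (Cmp S (Tm S (Idm S (dl S (Cod S v))) v) (Sy S (Dom S v) (dl S (Cod S v))))"
    using assms by (simp add: uncurry_bot_dlm)
  also have "\<dots> = Cmp S (Ev S (Cod S v) (Bot S)) (Cmp S (Sy S (Cod S v) (dl S (Cod S v))) (Tm S v (Idm S (dl S (Cod S v)))))"
    using assms by (simp add: sy_nat_cod)
  also have "\<dots> = uncurry_bot S (dl S (Cod S v)) (Cmp S (dd S (Cod S v)) v)"
    using assms by (simp add: uncurry_bot_cmp uncurry_bot_dd)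
  finally show "uncurry_bot S (dl S (Cod S v)) (Cmp S (dlm S (dlm S v)) (dd S (Dom S v)))
      = uncurry_bot S (dl S (Cod S v)) (Cmp S (dd S (Cod S v)) v)" .
qed (use assms in simp_all)

lemma dd_inv_nat:
  assumes "v \<in> Arr S"
  shows "Cmp S (inv_arr S (dd S (Cod S v))) (dlm S (dlm S v)) = Cmp S v (inv_arr S (dd S (Dom S v)))"
  by (rule inv_arr_commute) (use assms dd_nat[OF assms] in simp_all)

section \<open>Curryfication and evaluation\<close>

declare par_def [simp]

lemma cur_simps [simp]:
  assumes "F \<in> Arr S" "Dom S F = Tn S U (dl S B)" "Cod S F = C"
  shows "cur S U B C F \<in> Arr S" "Dom S (cur S U B C F) = U"
    "Cod S (cur S U B C F) = dl S (Tn S (dl S B) (dl S C))"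
  using assms by (simp_all add: cur_def)

lemma uncurry_bot_cur_dd:
  assumes "F \<in> Arr S" "Dom S F = Tn S U (dl S B)" "Cod S F = C"
  shows "uncurry_bot S (Tn S (dl S B) (dl S C)) (cur S U B C F)
    = Cmp S (uncurry_bot S (dl S C) (Cmp S (dd S C) F)) (inv_arr S (Asc S U (dl S B) (dl S C)))"
  using assms by (simp add: cur_def, simp add: uncurry_bot_def)

lemma uncurry_bot_cur:
  assumes "F \<in> Arr S" "Dom S F = Tn S U (dl S B)" "Cod S F = C"
  shows "uncurry_bot S (Tn S (dl S B) (dl S C)) (cur S U B C F) = Cmp S (Ev S C (Bot S))
    (Cmp S (Sy S C (dl S C)) (Cmp S (Tm S F (Idm S (dl S C))) (inv_arr S (Asc S U (dl S B) (dl S C)))))"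
proof -
  have "uncurry_bot S (dl S C) (Cmp S (dd S C) F)
      = Cmp S (Cmp S (Ev S (dl S C) (Bot S)) (Tm S (dd S C) (Idm S (dl S C)))) (Tm S F (Idm S (dl S C)))"
    using assms by (simp add: uncurry_bot_cmp uncurry_bot_def)
  then show ?thesis
    using assms by (simp add: uncurry_bot_cur_dd ev_dd)
qed

lemma cur_inj:
  assumes eq: "cur S U B C F = cur S U B C F'"
    and F: "F \<in> Arr S" "Dom S F = Tn S U (dl S B)" "Cod S F = C"
    and F': "F' \<in> Arr S" "Dom S F' = Tn S U (dl S B)" "Cod S F' = C"
  shows "F = F'"
proof -
  have "Cmp S (uncurry_bot S (dl S C) (Cmp S (dd S C) F)) (inv_arr S (Asc S U (dl S B) (dl S C)))
      = Cmp S (uncurry_bot S (dl S C) (Cmp S (dd S C) F')) (inv_arr S (Asc S U (dl S B) (dl S C)))"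
    using eq by (simp only: uncurry_bot_cur_dd[OF F, symmetric] uncurry_bot_cur_dd[OF F', symmetric])
  then have "uncurry_bot S (dl S C) (Cmp S (dd S C) F) = uncurry_bot S (dl S C) (Cmp S (dd S C) F')"
    by (rule cmp_cancel_right[where Q = "Asc S U (dl S B) (dl S C)"]) (use F F' in simp_all)
  then have "Cmp S (dd S C) F = Cmp S (dd S C) F'"
    by (rule uncurry_bot_inj) (use F F' in simp_all)
  then show ?thesis
    by (rule iso_cancel_left[OF dualizing]) (use F F' in simp_all)
qed

lemma cur_surj:
  assumes "h \<in> Arr S" "Dom S h = U" "Cod S h = dl S (Tn S (dl S B) (dl S C))"
  obtains F where "F \<in> Arr S" "Dom S F = Tn S U (dl S B)" "Cod S F = C" "cur S U B C F = h"
proof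
  define G where "G = lam S (Tn S U (dl S B)) (dl S C) (Bot S)
    (Cmp S (uncurry_bot S (Tn S (dl S B) (dl S C)) h) (Asc S U (dl S B) (dl S C)))"
  have G: "G \<in> Arr S" "Dom S G = Tn S U (dl S B)" "Cod S G = dl S (dl S C)"
    using assms by (simp_all add: G_def)
  show F: "Cmp S (inv_arr S (dd S C)) G \<in> Arr S" "Dom S (Cmp S (inv_arr S (dd S C)) G) = Tn S U (dl S B)"
    "Cod S (Cmp S (inv_arr S (dd S C)) G) = C"
    using G by simp_all
  have "uncurry_bot S (Tn S (dl S B) (dl S C)) (cur S U B C (Cmp S (inv_arr S (dd S C)) G))
      = Cmp S (uncurry_bot S (dl S C) G) (inv_arr S (Asc S U (dl S B) (dl S C)))"
    using F G by (simp add: uncurry_bot_cur_dd)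
  also have "\<dots> = uncurry_bot S (Tn S (dl S B) (dl S C)) h"
    using assms by (simp add: G_def)
  finally show "cur S U B C (Cmp S (inv_arr S (dd S C)) G) = h"
    by (rule uncurry_bot_inj) (use F assms in simp_all)
qed

lemma cur_nat:
  assumes "F \<in> Arr S" "Dom S F = Tn S U (dl S B)" "Cod S F = C" "k \<in> Arr S" "Cod S k = U"
  shows "Cmp S (cur S U B C F) k = cur S (Dom S k) B C (Cmp S F (Tm S k (Idm S (dl S B))))"
proof (rule uncurry_bot_inj[where Y = "Tn S (dl S B) (dl S C)"])
  have asc_inv_nat_k: "Cmp S (inv_arr S (Asc S U (dl S B) (dl S C))) (Tm S k (Idm S (Tn S (dl S B) (dl S C))))
    = Cmp S (Tm S (Tm S k (Idm S (dl S B))) (Idm S (dl S C))) (inv_arr S (Asc S (Dom S k) (dl S B) (dl S C)))"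
    using asc_inv_nat[of k "Idm S (dl S B)" "Idm S (dl S C)"] assms by simp
  have "uncurry_bot S (Tn S (dl S B) (dl S C)) (Cmp S (cur S U B C F) k) =
      Cmp S (uncurry_bot S (Tn S (dl S B) (dl S C)) (cur S U B C F)) (Tm S k (Idm S (Tn S (dl S B) (dl S C))))"
    using assms by (intro uncurry_bot_cmp) auto
  also have "\<dots> = Cmp S (Ev S C (Bot S)) (Cmp S (Sy S C (dl S C)) (Cmp S (Tm S F (Idm S (dl S C)))
      (Cmp S (inv_arr S (Asc S U (dl S B) (dl S C))) (Tm S k (Idm S (Tn S (dl S B) (dl S C)))))))"
    using assms by (simp add: uncurry_bot_cur)
  also have "\<dots> = uncurry_bot S (Tn S (dl S B) (dl S C)) (cur S (Dom S k) B C (Cmp S F (Tm S k (Idm S (dl S B)))))"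
    using assms by (simp add: asc_inv_nat_k uncurry_bot_cur)
  finally show "uncurry_bot S (Tn S (dl S B) (dl S C)) (Cmp S (cur S U B C F) k)
      = uncurry_bot S (Tn S (dl S B) (dl S C)) (cur S (Dom S k) B C (Cmp S F (Tm S k (Idm S (dl S B)))))" .
qed (use assms in simp_all)

lemma rev_props:
  "rev S C B \<in> Arr S" "Dom S (rev S C B) = Tn S (par S C B) (dl S B)" "Cod S (rev S C B) = C"
  "cur S (par S C B) B C (rev S C B) = Idm S (par S C B)"
proof -
  obtain F where F: "F \<in> Arr S" "Dom S F = Tn S (par S C B) (dl S B)" "Cod S F = C"
    "cur S (par S C B) B C F = Idm S (par S C B)"
    by (rule cur_surj[of "Idm S (par S C B)"]) simp_all
  have "inj_on (cur S (par S C B) B C) (hom S (Tn S (par S C B) (dl S B)) C)"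
    by (rule inj_onI, erule cur_inj) (auto simp: hom_def)
  then have "rev S C B = F"
    unfolding rev_def by (rule the_inj_on_preimage) (use F in \<open>auto simp: hom_def\<close>)
  then show "rev S C B \<in> Arr S" "Dom S (rev S C B) = Tn S (par S C B) (dl S B)" "Cod S (rev S C B) = C"
    "cur S (par S C B) B C (rev S C B) = Idm S (par S C B)"
    using F by simp_all
qed

lemmas rev_simps [simp] = rev_props(1-3)

lemma rev_cur:
  assumes "F \<in> Arr S" "Dom S F = Tn S U (dl S B)" "Cod S F = C"
  shows "Cmp S (rev S C B) (Tm S (cur S U B C F) (Idm S (dl S B))) = F"
proof (rule cur_inj)
  have "cur S U B C (Cmp S (rev S C B) (Tm S (cur S U B C F) (Idm S (dl S B))))
      = Cmp S (cur S (par S C B) B C (rev S C B)) (cur S U B C F)"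
    using assms by (subst cur_nat) auto
  also have "\<dots> = cur S U B C F"
    using assms by (simp add: rev_props(4)[unfolded par_def])
  finally show "cur S U B C (Cmp S (rev S C B) (Tm S (cur S U B C F) (Idm S (dl S B)))) = cur S U B C F" .
qed (use assms in simp_all)

lemma psym_simps [simp]: "psym S X Y \<in> Arr S" "Dom S (psym S X Y) = dl S (Tn S (dl S Y) (dl S X))"
  "Cod S (psym S X Y) = dl S (Tn S (dl S X) (dl S Y))"
  by (simp_all add: psym_def)

lemma psym_invol: "Cmp S (psym S Y X) (psym S X Y) = Idm S (dl S (Tn S (dl S Y) (dl S X)))"
  by (simp add: psym_def dlm_cmp)

lemma psym_invol_assoc:
  assumes "h \<in> Arr S" "Cod S h = dl S (Tn S (dl S Y) (dl S X))"
  shows "Cmp S (psym S Y X) (Cmp S (psym S X Y) h) = h"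
  using assms cmp_eq_assoc[OF psym_invol, where k = h] by simp

lemma lcur_simps [simp]:
  assumes "g \<in> Arr S" "Dom S g = Tn S (dl S B) A" "Cod S g = C"
  shows "lcur S B A C g \<in> Arr S" "Dom S (lcur S B A C g) = A"
    "Cod S (lcur S B A C g) = dl S (Tn S (dl S C) (dl S B))"
  using assms by (simp_all add: lcur_def)

lemma lcur_nat:
  assumes "g \<in> Arr S" "Dom S g = Tn S (dl S B) A" "Cod S g = C" "k \<in> Arr S" "Cod S k = A"
  shows "Cmp S (lcur S B A C g) k = lcur S B (Dom S k) C (Cmp S g (Tm S (Idm S (dl S B)) k))"
proof -
  have "Cmp S (lcur S B A C g) k = Cmp S (psym S C B) (Cmp S (cur S A B C (Cmp S g (Sy S A (dl S B)))) k)"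
    using assms by (simp add: lcur_def)
  also have "\<dots> = Cmp S (psym S C B)
      (cur S (Dom S k) B C (Cmp S g (Cmp S (Sy S A (dl S B)) (Tm S k (Idm S (dl S B))))))"
    using assms by (subst cur_nat) auto
  also have "\<dots> = Cmp S (psym S C B)
      (cur S (Dom S k) B C (Cmp S g (Cmp S (Tm S (Idm S (dl S B)) k) (Sy S (Dom S k) (dl S B)))))"
    using assms sy_nat_cod[of k "Idm S (dl S B)" A "dl S B"] by simp
  also have "\<dots> = lcur S B (Dom S k) C (Cmp S g (Tm S (Idm S (dl S B)) k))"
    using assms by (simp add: lcur_def)
  finally show ?thesis .
qed

lemma lcur_inj:
  assumes eq: "lcur S B A C g = lcur S B A C g'"
    and g: "g \<in> Arr S" "Dom S g = Tn S (dl S B) A" "Cod S g = C"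
    and g': "g' \<in> Arr S" "Dom S g' = Tn S (dl S B) A" "Cod S g' = C"
  shows "g = g'"
proof -
  have "Cmp S (psym S B C) (lcur S B A C g) = Cmp S (psym S B C) (lcur S B A C g')"
    using eq by simp
  then have "cur S A B C (Cmp S g (Sy S A (dl S B))) = cur S A B C (Cmp S g' (Sy S A (dl S B)))"
    using g g' by (simp add: lcur_def psym_invol_assoc)
  then have "Cmp S g (Sy S A (dl S B)) = Cmp S g' (Sy S A (dl S B))"
    by (rule cur_inj) (use g g' in simp_all)
  then show ?thesis
    by (rule cmp_cancel_right[where Q = "Sy S (dl S B) A"]) (use g g' in simp_all)
qed

lemma lcur_surj:
  assumes "h \<in> Arr S" "Dom S h = A" "Cod S h = dl S (Tn S (dl S C) (dl S B))"
  obtains g where "g \<in> Arr S" "Dom S g = Tn S (dl S B) A" "Cod S g = C" "lcur S B A C g = h"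
proof -
  obtain F where F: "F \<in> Arr S" "Dom S F = Tn S A (dl S B)" "Cod S F = C"
    "cur S A B C F = Cmp S (psym S B C) h"
    by (rule cur_surj[of "Cmp S (psym S B C) h" A B C]) (use assms in simp_all)
  have "lcur S B A C (Cmp S F (Sy S (dl S B) A)) = Cmp S (psym S C B) (cur S A B C F)"
    using F(1-3) by (simp add: lcur_def)
  also have "\<dots> = h"
    using assms by (simp add: F(4) psym_invol_assoc)
  finally show ?thesis
    using F that[of "Cmp S F (Sy S (dl S B) A)"] by simp
qed

lemma lev_props:
  "lev S B C \<in> Arr S" "Dom S (lev S B C) = Tn S (dl S B) (par S B C)" "Cod S (lev S B C) = C"
  "lcur S B (par S B C) C (lev S B C) = Idm S (par S B C)"
proof -
  obtain g where g: "g \<in> Arr S" "Dom S g = Tn S (dl S B) (par S B C)" "Cod S g = C"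
    "lcur S B (par S B C) C g = Idm S (par S B C)"
    by (rule lcur_surj[of "Idm S (par S B C)"]) simp_all
  have "inj_on (lcur S B (par S B C) C) (hom S (Tn S (dl S B) (par S B C)) C)"
    by (rule inj_onI, erule lcur_inj) (auto simp: hom_def)
  then have "lev S B C = g"
    unfolding lev_def by (rule the_inj_on_preimage) (use g in \<open>auto simp: hom_def\<close>)
  then show "lev S B C \<in> Arr S" "Dom S (lev S B C) = Tn S (dl S B) (par S B C)" "Cod S (lev S B C) = C"
    "lcur S B (par S B C) C (lev S B C) = Idm S (par S B C)"
    using g by simp_all
qed

lemmas lev_simps [simp] = lev_props(1-3)

lemma lev_lcur:
  assumes "g \<in> Arr S" "Dom S g = Tn S (dl S B) A" "Cod S g = C"
  shows "Cmp S (lev S B C) (Tm S (Idm S (dl S B)) (lcur S B A C g)) = g"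
proof (rule lcur_inj)
  have "lcur S B A C (Cmp S (lev S B C) (Tm S (Idm S (dl S B)) (lcur S B A C g)))
      = Cmp S (lcur S B (par S B C) C (lev S B C)) (lcur S B A C g)"
    using assms by (subst lcur_nat) auto
  also have "\<dots> = lcur S B A C g"
    using assms by (simp add: lev_props(4)[unfolded par_def])
  finally show "lcur S B A C (Cmp S (lev S B C) (Tm S (Idm S (dl S B)) (lcur S B A C g))) = lcur S B A C g" .
qed (use assms in simp_all)

section \<open>Uncurried forms of curryfications and names\<close>

lemma uncurry_bot_psym:
  assumes "h \<in> Arr S" "Cod S h = dl S (Tn S (dl S Y) (dl S X))" "Z = Tn S (dl S X) (dl S Y)"
  shows "uncurry_bot S Z (Cmp S (psym S X Y) h)
    = Cmp S (uncurry_bot S (Tn S (dl S Y) (dl S X)) h) (Tm S (Idm S (Dom S h)) (Sy S (dl S X) (dl S Y)))"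
  using assms by (simp add: psym_def uncurry_bot_dlm_cmp)

lemma uncurry_bot_cur_dl:
  assumes "F \<in> Arr S" "Dom S F = Tn S U (dl S B)" "Cod S F = dl S V"
  shows "uncurry_bot S (Tn S (dl S B) (dl S (dl S V))) (cur S U B (dl S V) F)
    = Cmp S (uncurry_bot S V F)
        (Cmp S (Tm S (Idm S (Tn S U (dl S B))) (inv_arr S (dd S V))) (inv_arr S (Asc S U (dl S B) (dl S (dl S V)))))"
proof -
  have "uncurry_bot S (Tn S (dl S B) (dl S (dl S V))) (cur S U B (dl S V) F)
      = Cmp S (Ev S (dl S V) (Bot S)) (Cmp S (Sy S (dl S V) (dl S (dl S V)))
          (Cmp S (Tm S F (Idm S (dl S (dl S V)))) (inv_arr S (Asc S U (dl S B) (dl S (dl S V))))))"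
    using assms by (rule uncurry_bot_cur)
  also have "\<dots> = Cmp S (Ev S (dl S V) (Bot S)) (Cmp S (Tm S (Idm S (dl S (dl S V))) F)
      (Cmp S (Sy S (Tn S U (dl S B)) (dl S (dl S V))) (inv_arr S (Asc S U (dl S B) (dl S (dl S V))))))"
    using assms by (simp add: sy_nat_assoc)
  also have "\<dots> = Cmp S (uncurry_bot S V F)
      (Cmp S (Tm S (Idm S (Tn S U (dl S B))) (inv_arr S (dd S V))) (inv_arr S (Asc S U (dl S B) (dl S (dl S V)))))"
    using assms arg_cong[OF ev_dl_tm_idm[of F V],
        of "\<lambda>u. Cmp S u (Cmp S (Sy S (Tn S U (dl S B)) (dl S (dl S V))) (inv_arr S (Asc S U (dl S B) (dl S (dl S V)))))"]
    by simp
  finally show ?thesis .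
qed

lemma uncurry_bot_lcur_dl:
  assumes "g \<in> Arr S" "Dom S g = Tn S (dl S B) A" "Cod S g = dl S V"
  shows "uncurry_bot S (Tn S (dl S (dl S V)) (dl S B)) (lcur S B A (dl S V) g)
    = Cmp S (uncurry_bot S V g) (Cmp S (Tm S (Sy S A (dl S B)) (inv_arr S (dd S V)))
        (Cmp S (inv_arr S (Asc S A (dl S B) (dl S (dl S V)))) (Tm S (Idm S A) (Sy S (dl S (dl S V)) (dl S B)))))"
proof -
  have "uncurry_bot S (Tn S (dl S (dl S V)) (dl S B)) (lcur S B A (dl S V) g)
      = Cmp S (uncurry_bot S (Tn S (dl S B) (dl S (dl S V))) (cur S A B (dl S V) (Cmp S g (Sy S A (dl S B)))))
          (Tm S (Idm S A) (Sy S (dl S (dl S V)) (dl S B)))"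
    unfolding lcur_def using assms by (subst uncurry_bot_psym) simp_all
  also have "\<dots> = Cmp S (Cmp S (uncurry_bot S V (Cmp S g (Sy S A (dl S B))))
      (Cmp S (Tm S (Idm S (Tn S A (dl S B))) (inv_arr S (dd S V))) (inv_arr S (Asc S A (dl S B) (dl S (dl S V))))))
      (Tm S (Idm S A) (Sy S (dl S (dl S V)) (dl S B)))"
    using assms by (subst uncurry_bot_cur_dl) simp_all
  also have "\<dots> = Cmp S (uncurry_bot S V g) (Cmp S (Tm S (Sy S A (dl S B)) (inv_arr S (dd S V)))
      (Cmp S (inv_arr S (Asc S A (dl S B) (dl S (dl S V)))) (Tm S (Idm S A) (Sy S (dl S (dl S V)) (dl S B)))))"
    using assms by (simp add: uncurry_bot_cmp)
  finally show ?thesis .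
qed

lemma uncurry_bot_lcur:
  assumes "g \<in> Arr S" "Dom S g = Tn S (dl S B) A" "Cod S g = C"
  shows "uncurry_bot S (Tn S (dl S C) (dl S B)) (lcur S B A C g)
    = Cmp S (Ev S C (Bot S)) (Cmp S (Tm S (Idm S (dl S C)) (Cmp S g (Sy S A (dl S B))))
        (Cmp S (Sy S (Tn S A (dl S B)) (dl S C))
          (Cmp S (inv_arr S (Asc S A (dl S B) (dl S C))) (Tm S (Idm S A) (Sy S (dl S C) (dl S B))))))"
proof -
  have "uncurry_bot S (Tn S (dl S C) (dl S B)) (lcur S B A C g)
      = Cmp S (uncurry_bot S (Tn S (dl S B) (dl S C)) (cur S A B C (Cmp S g (Sy S A (dl S B)))))
          (Tm S (Idm S A) (Sy S (dl S C) (dl S B)))"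
    unfolding lcur_def using assms by (subst uncurry_bot_psym) simp_all
  also have "\<dots> = Cmp S (Cmp S (Ev S C (Bot S)) (Cmp S (Sy S C (dl S C))
      (Cmp S (Tm S (Cmp S g (Sy S A (dl S B))) (Idm S (dl S C))) (inv_arr S (Asc S A (dl S B) (dl S C))))))
      (Tm S (Idm S A) (Sy S (dl S C) (dl S B)))"
    using assms by (subst uncurry_bot_cur) simp_all
  also have "\<dots> = Cmp S (Ev S C (Bot S)) (Cmp S (Tm S (Idm S (dl S C)) (Cmp S g (Sy S A (dl S B))))
      (Cmp S (Sy S (Tn S A (dl S B)) (dl S C))
        (Cmp S (inv_arr S (Asc S A (dl S B) (dl S C))) (Tm S (Idm S A) (Sy S (dl S C) (dl S B))))))"
    using assms by (simp add: sy_nat_assoc)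
  finally show ?thesis .
qed

lemma lu_sy_asc_inv_sy:
  "Cmp S (Tm S (Idm S W) (Lu S Z)) (Cmp S (Sy S (Tn S (Unit S) Z) W)
     (Cmp S (inv_arr S (Asc S (Unit S) Z W)) (Tm S (Idm S (Unit S)) (Sy S W Z))))
   = Lu S (Tn S W Z)"
proof -
  have "Cmp S (Tm S (Idm S W) (Lu S Z)) (Cmp S (Sy S (Tn S (Unit S) Z) W)
      (Cmp S (inv_arr S (Asc S (Unit S) Z W)) (Tm S (Idm S (Unit S)) (Sy S W Z))))
    = Cmp S (Sy S Z W) (Cmp S (Tm S (Lu S Z) (Idm S W))
      (Cmp S (inv_arr S (Asc S (Unit S) Z W)) (Tm S (Idm S (Unit S)) (Sy S W Z))))"
    using sy_nat_assoc[of "Lu S Z" "Idm S W" Z W] by simp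
  also have "\<dots> = Cmp S (Sy S Z W) (Cmp S (Lu S (Tn S Z W)) (Tm S (Idm S (Unit S)) (Sy S W Z)))"
    by (simp add: cmp_eq_assoc[OF lu_tn_asc_inv])
  also have "\<dots> = Lu S (Tn S W Z)"
    using lu_nat[of "Sy S W Z"] by simp
  finally show ?thesis .
qed

lemma uncurry_bot_name:
  assumes "h \<in> Arr S"
  shows "uncurry_bot S (Tn S (dl S (Cod S h)) (dl S (dl S (Dom S h)))) (name S h)
    = Cmp S (Ev S (Cod S h) (Bot S)) (Cmp S (Tm S (Idm S (dl S (Cod S h))) (Cmp S h (inv_arr S (dd S (Dom S h)))))
        (Lu S (Tn S (dl S (Cod S h)) (dl S (dl S (Dom S h))))))"
proof -
  let ?I = "Unit S" and ?X = "Dom S h" and ?Y = "Cod S h"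
  have "Cmp S (Ru S ?X) (Cmp S (Tm S (inv_arr S (dd S ?X)) (Idm S ?I)) (Sy S ?I (dl S (dl S ?X))))
      = Cmp S (inv_arr S (dd S ?X)) (Lu S (dl S (dl S ?X)))"
    using cmp_eq_assoc[OF ru_nat[of "inv_arr S (dd S ?X)"], of "Sy S ?I (dl S (dl S ?X))"] by simp
  then have "uncurry_bot S (Tn S (dl S ?Y) (dl S (dl S ?X))) (name S h)
      = Cmp S (Ev S ?Y (Bot S)) (Cmp S (Tm S (Idm S (dl S ?Y)) (Cmp S h (inv_arr S (dd S ?X))))
          (Cmp S (Tm S (Idm S (dl S ?Y)) (Lu S (dl S (dl S ?X)))) (Cmp S (Sy S (Tn S ?I (dl S (dl S ?X))) (dl S ?Y))
            (Cmp S (inv_arr S (Asc S ?I (dl S (dl S ?X)) (dl S ?Y))) (Tm S (Idm S ?I) (Sy S (dl S ?Y) (dl S (dl S ?X))))))))"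
    using assms by (simp add: name_def uncurry_bot_lcur)
  then show ?thesis
    using assms by (simp add: lu_sy_asc_inv_sy)
qed

lemma parm_dlm_name:
  assumes "h \<in> Arr S" "v \<in> Arr S" "Cod S v = Dom S h"
  shows "Cmp S (parm S (dlm S v) (Idm S (Cod S h))) (name S h) = name S (Cmp S h v)"
proof (rule uncurry_bot_inj[where Y = "Tn S (dl S (Cod S h)) (dl S (dl S (Dom S v)))"])
  have "uncurry_bot S (Tn S (dl S (Cod S h)) (dl S (dl S (Dom S v))))
      (Cmp S (parm S (dlm S v) (Idm S (Cod S h))) (name S h))
    = Cmp S (uncurry_bot S (Tn S (dl S (Cod S h)) (dl S (dl S (Dom S h)))) (name S h))
        (Tm S (Idm S (Unit S)) (Tm S (Idm S (dl S (Cod S h))) (dlm S (dlm S v))))"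
    using assms by (simp add: parm_def name_def uncurry_bot_dlm_cmp del: par_def)
  also have "\<dots> = Cmp S (Ev S (Cod S h) (Bot S)) (Cmp S (Tm S (Idm S (dl S (Cod S h)))
      (Cmp S h (Cmp S (inv_arr S (dd S (Cod S v))) (dlm S (dlm S v))))) (Lu S (Tn S (dl S (Cod S h)) (dl S (dl S (Dom S v))))))"
    using assms lu_nat[of "Tm S (Idm S (dl S (Cod S h))) (dlm S (dlm S v))"] by (simp add: uncurry_bot_name)
  also have "\<dots> = uncurry_bot S (Tn S (dl S (Cod S h)) (dl S (dl S (Dom S v)))) (name S (Cmp S h v))"
    using assms uncurry_bot_name[of "Cmp S h v"] by (simp add: dd_inv_nat[OF assms(2), unfolded assms(3)])
  finally show "uncurry_bot S (Tn S (dl S (Cod S h)) (dl S (dl S (Dom S v))))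
      (Cmp S (parm S (dlm S v) (Idm S (Cod S h))) (name S h))
    = uncurry_bot S (Tn S (dl S (Cod S h)) (dl S (dl S (Dom S v)))) (name S (Cmp S h v))" .
qed (use assms in \<open>simp_all add: parm_def name_def\<close>)

section \<open>The internal tensor of two names\<close>

lemma lev_rev_tm_curried:
  assumes p: "p \<in> Arr S" "Dom S p = Tn S (dl S A') U" "Cod S p = B"
    and q: "q \<in> Arr S" "Dom S q = Tn S V (dl S D')" "Cod S q = C"
  shows "Cmp S (Cmp S (Tm S (lev S A' B) (rev S C D'))
      (Cmp S (Asc S (Tn S (dl S A') (par S A' B)) (par S C D') (dl S D'))
        (Tm S (inv_arr S (Asc S (dl S A') (par S A' B) (par S C D'))) (Idm S (dl S D')))))
      (Tm S (Tm S (Idm S (dl S A')) (Tm S (lcur S A' U B p) (cur S V D' C q))) (Idm S (dl S D')))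
    = Cmp S (Tm S p q) (Cmp S (Asc S (Tn S (dl S A') U) V (dl S D'))
        (Tm S (inv_arr S (Asc S (dl S A') U V)) (Idm S (dl S D'))))"
proof -
  let ?a = "dl S A'" and ?d = "dl S D'"
  let ?P = "par S A' B" and ?Q = "par S C D'"
  let ?nf = "lcur S A' U B p" and ?ng = "cur S V D' C q"
  let ?m = "Tm S (lev S A' B) (rev S C D')"
  have nf: "?nf \<in> Arr S" "Dom S ?nf = U" "Cod S ?nf = ?P" using p by simp_all
  have ng: "?ng \<in> Arr S" "Dom S ?ng = V" "Cod S ?ng = ?Q" using q by simp_all
  have asc_inv_nf_ng: "Cmp S (inv_arr S (Asc S ?a ?P ?Q)) (Tm S (Idm S ?a) (Tm S ?nf ?ng))
      = Cmp S (Tm S (Tm S (Idm S ?a) ?nf) ?ng) (inv_arr S (Asc S ?a U V))"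
    using asc_inv_nat[of "Idm S ?a" ?nf ?ng] nf ng by simp
  have asc_nf_ng: "Cmp S (Asc S (Tn S ?a ?P) ?Q ?d) (Tm S (Tm S (Tm S (Idm S ?a) ?nf) ?ng) (Idm S ?d))
      = Cmp S (Tm S (Tm S (Idm S ?a) ?nf) (Tm S ?ng (Idm S ?d))) (Asc S (Tn S ?a U) V ?d)"
    using asc_nat[of "Tm S (Idm S ?a) ?nf" ?ng "Idm S ?d"] nf ng by simp
  have "Cmp S (Cmp S ?m (Cmp S (Asc S (Tn S ?a ?P) ?Q ?d) (Tm S (inv_arr S (Asc S ?a ?P ?Q)) (Idm S ?d))))
      (Tm S (Tm S (Idm S ?a) (Tm S ?nf ?ng)) (Idm S ?d))
    = Cmp S ?m (Cmp S (Asc S (Tn S ?a ?P) ?Q ?d)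
        (Tm S (Cmp S (inv_arr S (Asc S ?a ?P ?Q)) (Tm S (Idm S ?a) (Tm S ?nf ?ng))) (Idm S ?d)))"
    using nf ng by simp
  also have "\<dots> = Cmp S ?m (Cmp S (Asc S (Tn S ?a ?P) ?Q ?d)
      (Tm S (Cmp S (Tm S (Tm S (Idm S ?a) ?nf) ?ng) (inv_arr S (Asc S ?a U V))) (Idm S ?d)))"
    by (simp only: asc_inv_nf_ng)
  also have "\<dots> = Cmp S ?m (Cmp S (Cmp S (Asc S (Tn S ?a ?P) ?Q ?d) (Tm S (Tm S (Tm S (Idm S ?a) ?nf) ?ng) (Idm S ?d)))
      (Tm S (inv_arr S (Asc S ?a U V)) (Idm S ?d)))"
    using nf ng by simp
  also have "\<dots> = Cmp S ?m (Cmp S (Cmp S (Tm S (Tm S (Idm S ?a) ?nf) (Tm S ?ng (Idm S ?d))) (Asc S (Tn S ?a U) V ?d))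
      (Tm S (inv_arr S (Asc S ?a U V)) (Idm S ?d)))"
    by (simp only: asc_nf_ng)
  also have "\<dots> = Cmp S (Cmp S ?m (Tm S (Tm S (Idm S ?a) ?nf) (Tm S ?ng (Idm S ?d))))
      (Cmp S (Asc S (Tn S ?a U) V ?d) (Tm S (inv_arr S (Asc S ?a U V)) (Idm S ?d)))"
    using nf ng by (simp del: tm_cmp_merge tm_cmp_merge_assoc)
  also have "Cmp S ?m (Tm S (Tm S (Idm S ?a) ?nf) (Tm S ?ng (Idm S ?d))) = Tm S p q"
    using p q by (simp add: lev_lcur rev_cur)
  finally show ?thesis .
qed

lemma tau_tm_curried:
  assumes p: "p \<in> Arr S" "Dom S p = Tn S (dl S A') U" "Cod S p = B"
    and q: "q \<in> Arr S" "Dom S q = Tn S V (dl S D')" "Cod S q = C"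
  shows "Cmp S (tau S A' B C D') (Tm S (lcur S A' U B p) (cur S V D' C q))
    = lcur S A' (Tn S U V) (par S (Tn S B C) D') (cur S (Tn S (dl S A') (Tn S U V)) D' (Tn S B C)
        (Cmp S (Tm S p q) (Cmp S (Asc S (Tn S (dl S A') U) V (dl S D'))
          (Tm S (inv_arr S (Asc S (dl S A') U V)) (Idm S (dl S D'))))))"
proof -
  let ?a = "dl S A'" and ?d = "dl S D'"
  let ?P = "par S A' B" and ?Q = "par S C D'"
  let ?nf = "lcur S A' U B p" and ?ng = "cur S V D' C q"
  let ?r = "cur S (Tn S ?a (Tn S ?P ?Q)) D' (Tn S B C) (Cmp S (Tm S (lev S A' B) (rev S C D'))
    (Cmp S (Asc S (Tn S ?a ?P) ?Q ?d) (Tm S (inv_arr S (Asc S ?a ?P ?Q)) (Idm S ?d))))"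
  have nf: "?nf \<in> Arr S" "Dom S ?nf = U" "Cod S ?nf = ?P" using p by simp_all
  have ng: "?ng \<in> Arr S" "Dom S ?ng = V" "Cod S ?ng = ?Q" using q by simp_all
  have "Cmp S (tau S A' B C D') (Tm S ?nf ?ng)
      = lcur S A' (Tn S U V) (par S (Tn S B C) D') (Cmp S ?r (Tm S (Idm S ?a) (Tm S ?nf ?ng)))"
    unfolding tau_def Let_def using nf ng by (subst lcur_nat) simp_all
  also have "Cmp S ?r (Tm S (Idm S ?a) (Tm S ?nf ?ng)) = cur S (Tn S ?a (Tn S U V)) D' (Tn S B C)
      (Cmp S (Tm S p q) (Cmp S (Asc S (Tn S ?a U) V ?d) (Tm S (inv_arr S (Asc S ?a U V)) (Idm S ?d))))"
    using nf ng by (subst cur_nat) (simp_all only: lev_rev_tm_curried[OF p q], simp_all)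
  finally show ?thesis .
qed

lemma tau_names:
  assumes p: "p \<in> Arr S" "Dom S p = Tn S (dl S A') (Unit S)" "Cod S p = B"
    and q: "q \<in> Arr S" "Dom S q = Tn S (Unit S) (dl S D')" "Cod S q = C"
  shows "Cmp S (tau S A' B C D')
      (Cmp S (Tm S (lcur S A' (Unit S) B p) (cur S (Unit S) D' C q)) (inv_arr S (Lu S (Unit S))))
    = lcur S A' (Unit S) (par S (Tn S B C) D') (cur S (Tn S (dl S A') (Unit S)) D' (Tn S B C)
        (Cmp S (Tm S p q) (Cmp S (Asc S (Tn S (dl S A') (Unit S)) (Unit S) (dl S D'))
          (Tm S (Cmp S (inv_arr S (Asc S (dl S A') (Unit S) (Unit S)))
            (Tm S (Idm S (dl S A')) (inv_arr S (Lu S (Unit S))))) (Idm S (dl S D'))))))"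
proof -
  let ?I = "Unit S" and ?a = "dl S A'" and ?d = "dl S D'"
  let ?F = "Cmp S (Tm S p q) (Cmp S (Asc S (Tn S ?a ?I) ?I ?d) (Tm S (inv_arr S (Asc S ?a ?I ?I)) (Idm S ?d)))"
  have F: "?F \<in> Arr S" "Dom S ?F = Tn S (Tn S ?a (Tn S ?I ?I)) ?d" "Cod S ?F = Tn S B C"
    using p q by simp_all
  have "Cmp S (tau S A' B C D') (Cmp S (Tm S (lcur S A' ?I B p) (cur S ?I D' C q)) (inv_arr S (Lu S ?I)))
      = Cmp S (Cmp S (tau S A' B C D') (Tm S (lcur S A' ?I B p) (cur S ?I D' C q))) (inv_arr S (Lu S ?I))"
    using p q by (simp add: tau_def Let_def del: tm_cmp_merge tm_cmp_merge_assoc)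
  also have "\<dots> = Cmp S (lcur S A' (Tn S ?I ?I) (par S (Tn S B C) D') (cur S (Tn S ?a (Tn S ?I ?I)) D' (Tn S B C) ?F))
      (inv_arr S (Lu S ?I))"
    by (simp only: tau_tm_curried[OF p q])
  also have "\<dots> = lcur S A' ?I (par S (Tn S B C) D')
      (Cmp S (cur S (Tn S ?a (Tn S ?I ?I)) D' (Tn S B C) ?F) (Tm S (Idm S ?a) (inv_arr S (Lu S ?I))))"
    using F by (subst lcur_nat) simp_all
  also have "\<dots> = lcur S A' ?I (par S (Tn S B C) D')
      (cur S (Tn S ?a ?I) D' (Tn S B C) (Cmp S ?F (Tm S (Tm S (Idm S ?a) (inv_arr S (Lu S ?I))) (Idm S ?d))))"
    using F by (subst cur_nat) simp_all
  finally show ?thesis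
    using p q by simp
qed

lemma psym_name:
  assumes "g \<in> Arr S"
  shows "Cmp S (psym S (dl S (Dom S g)) (Cod S g)) (name S g) = cur S (Unit S) (dl S (Dom S g)) (Cod S g)
    (Cmp S (Cmp S g (Cmp S (Ru S (Dom S g)) (Tm S (inv_arr S (dd S (Dom S g))) (Idm S (Unit S)))))
      (Sy S (Unit S) (dl S (dl S (Dom S g)))))"
  using assms by (simp add: name_def lcur_def psym_invol_assoc)

text \<open>The structure maps of par are negations of tensor coherence maps, so after uncurrying only a
  permutation of tensor factors remains.\<close>

lemma uncurry_bot_pa_psym_pa_lcur:
  assumes R: "R \<in> Arr S" "Dom S R = Tn S (dl S (dl S A)) (Unit S)" "Cod S R = dl S (Tn S (dl S (dl S D)) (dl S (Tn S B C)))"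
  shows "uncurry_bot S (Tn S (dl S (Tn S B C)) (dl S (dl S (Tn S (dl S (dl S A)) (dl S (dl S D))))))
     (Cmp S (Cmp S (pa S (dl S D) (dl S A) (Tn S B C))
              (Cmp S (psym S (par S (dl S A) (Tn S B C)) (dl S D))
                 (pa S (dl S A) (Tn S B C) (dl S D))))
        (lcur S (dl S A) (Unit S) (par S (Tn S B C) (dl S D)) R))
   = Cmp S (uncurry_bot S (Tn S (dl S (dl S D)) (dl S (Tn S B C))) R)
      (Cmp S (Tm S (Sy S (Unit S) (dl S (dl S A))) (Idm S (Tn S (dl S (dl S D)) (dl S (Tn S B C)))))
        (Cmp S (inv_arr S (Asc S (Unit S) (dl S (dl S A)) (Tn S (dl S (dl S D)) (dl S (Tn S B C)))))
          (Tm S (Idm S (Unit S))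
             (Cmp S (Sy S (Tn S (dl S (dl S D)) (dl S (Tn S B C))) (dl S (dl S A)))
               (Cmp S (inv_arr S (Asc S (dl S (dl S D)) (dl S (Tn S B C)) (dl S (dl S A))))
                 (Cmp S (Sy S (Tn S (dl S (Tn S B C)) (dl S (dl S A))) (dl S (dl S D)))
                   (Cmp S (inv_arr S (Asc S (dl S (Tn S B C)) (dl S (dl S A)) (dl S (dl S D))))
                      (Tm S (Idm S (dl S (Tn S B C))) (inv_arr S (dd S (Tn S (dl S (dl S A)) (dl S (dl S D)))))))))))))"
proof -
  let ?I = "Unit S" and ?X = "dl S (Tn S B C)" and ?a = "dl S (dl S A)" and ?d = "dl S (dl S D)"
  let ?V = "Tn S ?d ?X" and ?Xa = "Tn S ?X ?a"
  let ?k = "Cmp S (inv_arr S (Asc S ?X ?a ?d)) (Tm S (Idm S ?X) (inv_arr S (dd S (Tn S ?a ?d))))"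
  let ?M = "Cmp S (Sy S ?V ?a) (Cmp S (inv_arr S (Asc S ?d ?X ?a)) (Cmp S (Sy S ?Xa ?d) ?k))"
  have sy_nat_dd_Xa: "Cmp S (Sy S (dl S (dl S ?Xa)) ?d) (Tm S (dd S ?Xa) (Idm S ?d)) = Cmp S (Tm S (Idm S ?d) (dd S ?Xa)) (Sy S ?Xa ?d)"
    using sy_nat[of "dd S ?Xa" "Idm S ?d"] by simp
  have sy_nat_dd_V: "Cmp S (Sy S (dl S (dl S ?V)) ?a) (Tm S (dd S ?V) (Idm S ?a)) = Cmp S (Tm S (Idm S ?a) (dd S ?V)) (Sy S ?V ?a)"
    using sy_nat[of "dd S ?V" "Idm S ?a"] by simp
  have asc_inv_nat_dd_V: "Cmp S (inv_arr S (Asc S ?I ?a (dl S (dl S ?V)))) (Tm S (Idm S ?I) (Tm S (Idm S ?a) (dd S ?V)))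
      = Cmp S (Tm S (Idm S (Tn S ?I ?a)) (dd S ?V)) (inv_arr S (Asc S ?I ?a ?V))"
    using asc_inv_nat[of "Idm S ?I" "Idm S ?a" "dd S ?V"] by simp
  show ?thesis
    using R arg_cong[OF sy_nat_dd_Xa, of "\<lambda>u. Cmp S u (?k)"]
      arg_cong[OF sy_nat_dd_V, of "\<lambda>u. Cmp S u (Cmp S (inv_arr S (Asc S ?d ?X ?a)) (Cmp S (Sy S ?Xa ?d) ?k))"]
      arg_cong[OF asc_inv_nat_dd_V, of "\<lambda>u. Cmp S u (Tm S (Idm S ?I) ?M)"]
    by (simp add: pa_def psym_def uncurry_bot_dlm_cmp uncurry_bot_lcur_dl)
qed

text \<open>The three rotations cancel by \<open>sy_asc_inv_cycle\<close> and the unitors by \<open>ru_tm_lu_unit\<close>.\<close>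

lemma uncurry_bot_cur_names_rotated:
  assumes f: "f \<in> Arr S" "Dom S f = A" "Cod S f = B" and g: "g \<in> Arr S" "Dom S g = D" "Cod S g = C"
  defines "p \<equiv> Cmp S f (Cmp S (Ru S A) (Tm S (inv_arr S (dd S A)) (Idm S (Unit S))))"
    and "q \<equiv> Cmp S (Cmp S g (Cmp S (Ru S D) (Tm S (inv_arr S (dd S D)) (Idm S (Unit S))))) (Sy S (Unit S) (dl S (dl S D)))"
  shows "Cmp S (uncurry_bot S (Tn S (dl S (dl S D)) (dl S (Tn S B C)))
      (cur S (Tn S (dl S (dl S A)) (Unit S)) (dl S D) (Tn S B C)
         (Cmp S (Tm S p q) (Cmp S (Asc S (Tn S (dl S (dl S A)) (Unit S)) (Unit S) (dl S (dl S D)))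
            (Tm S (Cmp S (inv_arr S (Asc S (dl S (dl S A)) (Unit S) (Unit S)))
              (Tm S (Idm S (dl S (dl S A))) (inv_arr S (Lu S (Unit S))))) (Idm S (dl S (dl S D))))))))
      (Cmp S (Tm S (Sy S (Unit S) (dl S (dl S A))) (Idm S (Tn S (dl S (dl S D)) (dl S (Tn S B C)))))
        (Cmp S (inv_arr S (Asc S (Unit S) (dl S (dl S A)) (Tn S (dl S (dl S D)) (dl S (Tn S B C)))))
          (Tm S (Idm S (Unit S))
             (Cmp S (Sy S (Tn S (dl S (dl S D)) (dl S (Tn S B C))) (dl S (dl S A)))
               (Cmp S (inv_arr S (Asc S (dl S (dl S D)) (dl S (Tn S B C)) (dl S (dl S A))))
                 (Cmp S (Sy S (Tn S (dl S (Tn S B C)) (dl S (dl S A))) (dl S (dl S D)))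
                   (Cmp S (inv_arr S (Asc S (dl S (Tn S B C)) (dl S (dl S A)) (dl S (dl S D))))
                      (Tm S (Idm S (dl S (Tn S B C))) (inv_arr S (dd S (Tn S (dl S (dl S A)) (dl S (dl S D)))))))))))))
   = Cmp S (Ev S (Tn S B C) (Bot S)) (Cmp S (Tm S (Idm S (dl S (Tn S B C)))
       (Cmp S (Tm S (Cmp S f (inv_arr S (dd S A))) (Cmp S g (inv_arr S (dd S D))))
         (inv_arr S (dd S (Tn S (dl S (dl S A)) (dl S (dl S D)))))))
       (Lu S (Tn S (dl S (Tn S B C)) (dl S (dl S (Tn S (dl S (dl S A)) (dl S (dl S D))))))))"
proof -
  let ?I = "Unit S" and ?X = "dl S (Tn S B C)" and ?a = "dl S (dl S A)" and ?d = "dl S (dl S D)"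
  let ?V = "Tn S ?d ?X" and ?Xa = "Tn S ?X ?a" and ?ad = "Tn S ?a ?d"
  let ?fa = "Cmp S f (inv_arr S (dd S A))" and ?gd = "Cmp S g (inv_arr S (dd S D))"
  let ?Fm = "Tm S ?fa ?gd"
  let ?k = "Cmp S (inv_arr S (Asc S ?X ?a ?d)) (Tm S (Idm S ?X) (inv_arr S (dd S (Tn S ?a ?d))))"
  let ?M = "Cmp S (Sy S ?V ?a) (Cmp S (inv_arr S (Asc S ?d ?X ?a)) (Cmp S (Sy S ?Xa ?d) ?k))"
  let ?rest = "Cmp S (Tm S (Sy S ?I ?a) (Idm S ?V)) (Cmp S (inv_arr S (Asc S ?I ?a ?V)) (Tm S (Idm S ?I) ?M))"
  have ru_dd_A: "Cmp S (Ru S A) (Tm S (inv_arr S (dd S A)) (Idm S ?I)) = Cmp S (inv_arr S (dd S A)) (Ru S ?a)"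
    using ru_nat[of "inv_arr S (dd S A)"] by simp
  have ru_dd_D: "Cmp S (Ru S D) (Tm S (inv_arr S (dd S D)) (Idm S ?I)) = Cmp S (inv_arr S (dd S D)) (Ru S ?d)"
    using ru_nat[of "inv_arr S (dd S D)"] by simp
  have unitors_cancel: "Cmp S ?Fm (Cmp S (Tm S (Ru S ?a) (Lu S ?d)) (Cmp S (Asc S (Tn S ?a ?I) ?I ?d)
      (Tm S (Cmp S (inv_arr S (Asc S ?a ?I ?I)) (Tm S (Idm S ?a) (inv_arr S (Lu S ?I)))) (Idm S ?d))))
     = Cmp S ?Fm (Tm S (Ru S ?a) (Idm S ?d))"
    by (rule arg_cong[OF ru_tm_lu_unit])
  have sy_nat_ru: "Cmp S (Sy S ?ad ?X) (Tm S (Tm S (Ru S ?a) (Idm S ?d)) (Idm S ?X))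
      = Cmp S (Tm S (Idm S ?X) (Tm S (Ru S ?a) (Idm S ?d))) (Sy S (Tn S (Tn S ?a ?I) ?d) ?X)"
    using sy_nat[of "Tm S (Ru S ?a) (Idm S ?d)" "Idm S ?X"] by simp
  have asc_inv_nat_ru: "Cmp S (inv_arr S (Asc S ?a ?d ?X)) (Tm S (Ru S ?a) (Tm S (Idm S ?d) (Idm S ?X)))
      = Cmp S (Tm S (Tm S (Ru S ?a) (Idm S ?d)) (Idm S ?X)) (inv_arr S (Asc S (Tn S ?a ?I) ?d ?X))"
    using asc_inv_nat[of "Ru S ?a" "Idm S ?d" "Idm S ?X"] by simp
  have lu_nat_M: "Cmp S (Lu S (Tn S ?a ?V)) (Tm S (Idm S ?I) ?M) = Cmp S ?M (Lu S (Tn S ?X (dl S (dl S ?ad))))"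
    using lu_nat[of ?M] by simp
  have sy_nat_fg: "Cmp S (Sy S (Tn S B C) ?X) (Tm S (Tm S (Cmp S f (Cmp S (inv_arr S (dd S A)) (Ru S ?a))) ?gd) (Idm S ?X))
     = Cmp S (Tm S (Idm S ?X) (Tm S (Cmp S f (Cmp S (inv_arr S (dd S A)) (Ru S ?a))) ?gd)) (Sy S (Tn S (Tn S ?a ?I) ?d) ?X)"
    using sy_nat[of "Tm S (Cmp S f (Cmp S (inv_arr S (dd S A)) (Ru S ?a))) ?gd" "Idm S ?X"] f g by simp
  show ?thesis
    using f g unitors_cancel
      arg_cong[OF sy_nat_fg, of "\<lambda>u. Cmp S u (Cmp S (inv_arr S (Asc S (Tn S ?a ?I) ?d ?X)) ?rest)"]
      arg_cong[OF arg_cong[OF sy_nat_ru[symmetric], of "Cmp S (Tm S (Idm S ?X) ?Fm)"],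
        of "\<lambda>u. Cmp S u (Cmp S (inv_arr S (Asc S (Tn S ?a ?I) ?d ?X)) ?rest)"]
      arg_cong[OF asc_inv_nat_ru[symmetric], of "\<lambda>u. Cmp S u ?rest"]
    by (simp add: p_def q_def uncurry_bot_cur ru_dd_A ru_dd_D cmp_eq_assoc[OF lu_tn_asc_inv] lu_nat_M
        sy_asc_inv_cycle_assoc)
qed

lemma pa_psym_pa_tau_names_eq_name:
  assumes "f \<in> hom S A B" "g \<in> hom S D C"
  shows "Cmp S
           (Cmp S (pa S (dl S D) (dl S A) (Tn S B C))
              (Cmp S (psym S (par S (dl S A) (Tn S B C)) (dl S D))
                 (pa S (dl S A) (Tn S B C) (dl S D))))
           (Cmp S (tau S (dl S A) B C (dl S D))
              (Cmp S (Tm S (name S f) (Cmp S (psym S (dl S D) C) (name S g)))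
                 (inv_arr S (Lu S (Unit S)))))
       = name S (Cmp S (Tm S f g) (Tm S (inv_arr S (dd S A)) (inv_arr S (dd S D))))"
    (is "Cmp S ?pa (Cmp S (tau S (dl S A) B C (dl S D)) ?names) = name S ?h")
proof -
  have f: "f \<in> Arr S" "Dom S f = A" "Cod S f = B" and g: "g \<in> Arr S" "Dom S g = D" "Cod S g = C"
    using assms by (auto simp: hom_def)
  define p where "p = Cmp S f (Cmp S (Ru S A) (Tm S (inv_arr S (dd S A)) (Idm S (Unit S))))"
  define q where "q = Cmp S (Cmp S g (Cmp S (Ru S D) (Tm S (inv_arr S (dd S D)) (Idm S (Unit S)))))
    (Sy S (Unit S) (dl S (dl S D)))"
  define R where "R = cur S (Tn S (dl S (dl S A)) (Unit S)) (dl S D) (Tn S B C)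
    (Cmp S (Tm S p q) (Cmp S (Asc S (Tn S (dl S (dl S A)) (Unit S)) (Unit S) (dl S (dl S D)))
      (Tm S (Cmp S (inv_arr S (Asc S (dl S (dl S A)) (Unit S) (Unit S)))
        (Tm S (Idm S (dl S (dl S A))) (inv_arr S (Lu S (Unit S))))) (Idm S (dl S (dl S D))))))"
  have p: "p \<in> Arr S" "Dom S p = Tn S (dl S (dl S A)) (Unit S)" "Cod S p = B"
    using f by (simp_all add: p_def)
  have q: "q \<in> Arr S" "Dom S q = Tn S (Unit S) (dl S (dl S D))" "Cod S q = C"
    using g by (simp_all add: q_def)
  have R: "R \<in> Arr S" "Dom S R = Tn S (dl S (dl S A)) (Unit S)"
    "Cod S R = dl S (Tn S (dl S (dl S D)) (dl S (Tn S B C)))"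
    using p q by (simp_all add: R_def)
  have "Cmp S (tau S (dl S A) B C (dl S D)) ?names = lcur S (dl S A) (Unit S) (par S (Tn S B C) (dl S D)) R"
    using tau_names[OF p q] f g psym_name[of g]
    by (simp add: name_def p_def q_def R_def del: par_def)
  moreover have "uncurry_bot S (Tn S (dl S (Tn S B C)) (dl S (dl S (Tn S (dl S (dl S A)) (dl S (dl S D))))))
      (Cmp S ?pa (lcur S (dl S A) (Unit S) (par S (Tn S B C) (dl S D)) R))
    = uncurry_bot S (Tn S (dl S (Tn S B C)) (dl S (dl S (Tn S (dl S (dl S A)) (dl S (dl S D)))))) (name S ?h)"
    unfolding uncurry_bot_pa_psym_pa_lcur[OF R]
    unfolding R_def p_def q_def uncurry_bot_cur_names_rotated[OF f g]
    using f g uncurry_bot_name[of ?h] by simp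
  ultimately show ?thesis
    using R f g by (auto intro: uncurry_bot_inj simp: pa_def psym_def name_def)
qed

end

theorem proposition2p10:
  fixes S :: "('o,'m) sacat"
  assumes "star_autonomous S"
    and "f \<in> hom S A B"
    and "g \<in> hom S D C"
  shows "Cmp S
           (Cmp S (pa S (dl S D) (dl S A) (Tn S B C))
              (Cmp S (psym S (par S (dl S A) (Tn S B C)) (dl S D))
                 (pa S (dl S A) (Tn S B C) (dl S D))))
           (Cmp S (tau S (dl S A) B C (dl S D))
              (Cmp S (Tm S (name S f) (Cmp S (psym S (dl S D) C) (name S g)))
                 (inv_arr S (Lu S (Unit S)))))
       = Cmp S (parm S (dlm S (Tm S (inv_arr S (dd S A)) (inv_arr S (dd S D)))) (Idm S (Tn S B C)))
           (name S (Tm S f g))"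
proof -
  interpret star_autonomous S by fact
  let ?v = "Tm S (inv_arr S (dd S A)) (inv_arr S (dd S D))"
  have "f \<in> Arr S" "Dom S f = A" "Cod S f = B" "g \<in> Arr S" "Dom S g = D" "Cod S g = C"
    using assms(2,3) by (auto simp: hom_def)
  then have "Cmp S (parm S (dlm S ?v) (Idm S (Tn S B C))) (name S (Tm S f g)) = name S (Cmp S (Tm S f g) ?v)"
    using parm_dlm_name[of "Tm S f g" ?v] by simp
  then show ?thesis
    using pa_psym_pa_tau_names_eq_name[OF assms(2,3)] by simp
qed

end
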